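(* Assume Conditions (A) and (B) below hold. For any $r_0>0$, $$\sup_{\beta\in\beta^*+\mathbb{B}_\Sigma(r_0)}\|E\{e_i(\beta)W_{i,-j}\}\|_2\le\sup_{\beta\in\beta^*+\mathbb{B}_\Sigma(r_0)}\|E\{e_i(\beta)W_i\}\|_2\le\tfrac12f_um_3r_0^2.$$ In addition, if Condition (D) holds, then $\sup_{\beta\in\beta^*+\mathbb{B}_\Sigma(r_0)}|E\{e_i(\beta)\omega_i\}|\le f_ub_Xr_0^2/2$.
   Context: Fix $\tau\in(0,1)$. Let $(Y_i,X_i)$ be distributed as $(Y,X)\in\mathbb{R}\times\mathbb{R}^p$ (first coordinate of $X$ equal to 1), with conditional $\tau$-quantile $X^T\beta^*$ and conditional lower expected shortfall $\tau^{-1}\int_0^\tau\mathcal{Q}_u(Y\mid X)du=X^T\theta^*$. Let $\varepsilon=Y-X^T\beta^*$, $\varepsilon_-=\min(\varepsilon,0)$, $\Sigma=E(XX^T)$ (positive definite), $\|u\|_\Sigma=\|\Sigma^{1/2}u\|_2$, $\mathbb{B}_\Sigma(r)=\{u:\|u\|_\Sigma\le r\}$, $m_3=\sup_{\|u\|_2=1}E|X^Tu|^3/\{E(X^Tu)^2\}^{3/2}$, $s=\max(\|\beta^*\|_0,\|\theta^*\|_0)$, $\mathbb{C}(\mathcal{S})=\{\delta:\|\delta_{\mathcal{S}^c}\|_1\le3\|\delta_{\mathcal{S}}\|_1\}$. $Z_i(\beta)=(Y_i-X_i^T\beta)\mathbb{1}(Y_i\le X_i^T\beta)+\tau X_i^T\beta$,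 $e_i(\beta)=Z_i(\beta)-\tau X_i^T\theta^*$. Fix an index $j$; $X_{i,-j}$ removes the $j$th entry; $\Sigma_{-j}=E(X_{-j}X_{-j}^T)$; $W_i=\Sigma^{-1/2}X_i$, $W_{i,-j}=\Sigma_{-j}^{-1/2}X_{i,-j}$. Condition (A): $F_{\varepsilon|X}$ continuously differentiable with $|F_{\varepsilon|X}(t)-F_{\varepsilon|X}(0)|\le f_u|t|$ for all $t$, $f_u>0$; $E(\varepsilon_-^2\mid X)\le\sigma_\varepsilon^2$, $E(|\varepsilon_-|^k\mid X)\le k!\sigma_\varepsilon^2b_\varepsilon^{k-2}/2$ for integers $k\ge3$, constants $b_\varepsilon\ge\sigma_\varepsilon>0$. Condition (B): $s\in[1,\min(p,n)]$; constants $b_X,m_4\ge1$ with $\|X\|_\infty\le b_X$ a.s., $\sup_{\|u\|_2=1}E\{(X^Tu)^4\}/[E\{(X^Tu)^2\}]^2\le m_4$; $\underline{\phi}^2=\inf_{|\mathcal{S}|\le s}\inf_{\delta\in\mathbb{C}(\mathcal{S})}\delta^T\Sigma\delta/\|\delta_{\mathcal{S}}\|_2^2>0$. Condition (D): $\gamma^*=\arg\min_\gamma E(X_j-X_{-j}^T\gamma)^2$ is $s_0$-sparse, $1\le s_0<\min(p,n)$; $\omega_i=X_{i,j}-X_{i,-j}^T\gamma^*$ satisfies $|\omega_i|\le b_X$; (B) holds also for $X_{-j},\Sigma_{-j}$. *)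

theory Defs
  imports "HOL-Analysis.Analysis" "HOL-Probability.Probability"
begin

definition pos_def_mat :: "real^'n^'n \<Rightarrow> bool" where
  "pos_def_mat A \<longleftrightarrow> (\<forall>u. u \<noteq> 0 \<longrightarrow> u \<bullet> (A *v u) > 0)"

definition is_psd_sqrt :: "real^'n^'n \<Rightarrow> real^'n^'n \<Rightarrow> bool" where
  "is_psd_sqrt S A \<longleftrightarrow> transpose S = S \<and> pos_def_mat S \<and> S ** S = A"

definition second_moment :: "'a measure \<Rightarrow> ('a \<Rightarrow> real^'n) \<Rightarrow> real^'n^'n" where
  "second_moment M X = (\<chi> i k. \<integral>\<omega>. X \<omega> $ i * X \<omega> $ k \<partial>M)"

definition l0norm :: "real^'n \<Rightarrow> nat" where
  "l0norm v = card {i. v $ i \<noteq> 0}"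

definition l1norm :: "real^'n \<Rightarrow> real" where
  "l1norm v = (\<Sum>i\<in>UNIV. \<bar>v $ i\<bar>)"

definition restr :: "'n set \<Rightarrow> real^'n \<Rightarrow> real^'n" where
  "restr S v = (\<chi> i. if i \<in> S then v $ i else 0)"

definition cone :: "'n set \<Rightarrow> (real^'n) set" where
  "cone S = {\<delta>. l1norm (restr (- S) \<delta>) \<le> 3 * l1norm (restr S \<delta>)}"

definition re_const :: "real^'n^'n \<Rightarrow> nat \<Rightarrow> real" where
  "re_const Sig s = Inf {(\<delta> \<bullet> (Sig *v \<delta>)) / (norm (restr S \<delta>))\<^sup>2 | S \<delta>.
       card S \<le> s \<and> \<delta> \<in> cone S \<and> \<delta> \<noteq> 0}"

definition m3_const :: "'a measure \<Rightarrow> ('a \<Rightarrow> real^'n) \<Rightarrow> real" where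
  "m3_const M X = Sup {(\<integral>\<omega>. \<bar>X \<omega> \<bullet> u\<bar> ^ 3 \<partial>M) / ((\<integral>\<omega>. (X \<omega> \<bullet> u)\<^sup>2 \<partial>M) powr (3/2)) | u.
       norm u = 1}"

definition is_cond_distr :: "'a measure \<Rightarrow> ('a \<Rightarrow> real^'n) \<Rightarrow> ('a \<Rightarrow> real) \<Rightarrow> (real^'n \<Rightarrow> real measure) \<Rightarrow> bool" where
  "is_cond_distr M X Y K \<longleftrightarrow> K \<in> borel \<rightarrow>\<^sub>M prob_algebra borel \<and>
     (\<forall>A \<in> sets borel. \<forall>B \<in> sets borel.
        measure M {\<omega> \<in> space M. X \<omega> \<in> A \<and> Y \<omega> \<in> B}
          = (\<integral>x. indicator A x * measure (K x) B \<partial>(distr M borel X)))"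

definition cond_quantile :: "(real^'n \<Rightarrow> real measure) \<Rightarrow> real^'n \<Rightarrow> real \<Rightarrow> real" where
  "cond_quantile K x u = Inf {t. u \<le> measure (K x) {..t}}"

text \<open>Conditional distribution function of eps = Y - X^T beta* given X = x.\<close>
definition F_eps :: "(real^'n \<Rightarrow> real measure) \<Rightarrow> real^'n \<Rightarrow> real^'n \<Rightarrow> real \<Rightarrow> real" where
  "F_eps K bstar x t = measure (K x) {..t + x \<bullet> bstar}"

definition Zfun :: "real \<Rightarrow> real \<Rightarrow> real^'n \<Rightarrow> real^'n \<Rightarrow> real" where
  "Zfun \<tau> y x \<beta> = (y - x \<bullet> \<beta>) * (if y \<le> x \<bullet> \<beta> then 1 else 0) + \<tau> * (x \<bullet> \<beta>)"

definition efun :: "real \<Rightarrow> real^'n \<Rightarrow> real \<Rightarrow> real^'n \<Rightarrow> real^'n \<Rightarrow> real" where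
  "efun \<tau> \<theta>star y x \<beta> = Zfun \<tau> y x \<beta> - \<tau> * (x \<bullet> \<theta>star)"

text \<open>Model: conditional tau-quantile X^T beta*, conditional lower ES X^T theta*.\<close>
definition model_QES :: "'a measure \<Rightarrow> ('a \<Rightarrow> real^'n) \<Rightarrow> (real^'n \<Rightarrow> real measure)
     \<Rightarrow> real \<Rightarrow> real^'n \<Rightarrow> real^'n \<Rightarrow> bool" where
  "model_QES M X K \<tau> bstar tstar \<longleftrightarrow>
     (AE x in distr M borel X. cond_quantile K x \<tau> = x \<bullet> bstar \<and>
        (1 / \<tau>) * (LINT u:{0..\<tau>}|lborel. cond_quantile K x u) = x \<bullet> tstar)"

definition conditionA :: "'a measure \<Rightarrow> ('a \<Rightarrow> real^'n) \<Rightarrow> (real^'n \<Rightarrow> real measure)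
     \<Rightarrow> real^'n \<Rightarrow> real \<Rightarrow> real \<Rightarrow> real \<Rightarrow> bool" where
  "conditionA M X K bstar fu se be \<longleftrightarrow> fu > 0 \<and> be \<ge> se \<and> se > 0 \<and>
     (AE x in distr M borel X.
        F_eps K bstar x C1_differentiable_on UNIV \<and>
        (\<forall>t. \<bar>F_eps K bstar x t - F_eps K bstar x 0\<bar> \<le> fu * \<bar>t\<bar>) \<and>
        (\<integral>\<^sup>+ y. ennreal ((min (y - x \<bullet> bstar) 0)\<^sup>2) \<partial>K x) \<le> ennreal (se\<^sup>2) \<and>
        (\<forall>k::nat. k \<ge> 3 \<longrightarrow>
           (\<integral>\<^sup>+ y. ennreal (\<bar>min (y - x \<bullet> bstar) 0\<bar> ^ k) \<partial>K x)
             \<le> ennreal (fact k * se\<^sup>2 * be ^ (k - 2) / 2)))"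

definition design_cond :: "'a measure \<Rightarrow> ('a \<Rightarrow> real^'n) \<Rightarrow> nat \<Rightarrow> real \<Rightarrow> real \<Rightarrow> bool" where
  "design_cond M X s bX m4 \<longleftrightarrow> bX \<ge> 1 \<and> m4 \<ge> 1 \<and>
     (AE \<omega> in M. infnorm (X \<omega>) \<le> bX) \<and>
     (\<forall>u. norm u = 1 \<longrightarrow>
        (\<integral>\<omega>. (X \<omega> \<bullet> u) ^ 4 \<partial>M) / (\<integral>\<omega>. (X \<omega> \<bullet> u)\<^sup>2 \<partial>M)\<^sup>2 \<le> m4) \<and>
     re_const (second_moment M X) s > 0"

definition conditionB :: "'a measure \<Rightarrow> ('a \<Rightarrow> real^'n) \<Rightarrow> nat \<Rightarrow> real^'n \<Rightarrow> real^'n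
     \<Rightarrow> real \<Rightarrow> real \<Rightarrow> bool" where
  "conditionB M X n bstar tstar bX m4 \<longleftrightarrow>
     (let s = max (l0norm bstar) (l0norm tstar) in
       1 \<le> s \<and> s \<le> min CARD('n) n \<and> design_cond M X s bX m4)"

text \<open>X_{-j}: idx enumerates the coordinates other than j.\<close>
definition drop_coord :: "('q \<Rightarrow> 'n) \<Rightarrow> real^'n \<Rightarrow> real^'q" where
  "drop_coord idx x = (\<chi> k. x $ idx k)"

definition conditionD :: "'a measure \<Rightarrow> ('a \<Rightarrow> real^'n) \<Rightarrow> nat \<Rightarrow> 'n \<Rightarrow> ('q \<Rightarrow> 'n)
     \<Rightarrow> real^'q \<Rightarrow> nat \<Rightarrow> nat \<Rightarrow> real \<Rightarrow> real \<Rightarrow> bool" where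
  "conditionD M X n j idx gstar s0 s bX m4 \<longleftrightarrow>
     (\<forall>\<gamma>. (\<integral>\<omega>. (X \<omega> $ j - drop_coord idx (X \<omega>) \<bullet> gstar)\<^sup>2 \<partial>M)
            \<le> (\<integral>\<omega>. (X \<omega> $ j - drop_coord idx (X \<omega>) \<bullet> \<gamma>)\<^sup>2 \<partial>M)) \<and>
     l0norm gstar \<le> s0 \<and> 1 \<le> s0 \<and> s0 < min CARD('n) n \<and>
     (AE \<omega> in M. \<bar>X \<omega> $ j - drop_coord idx (X \<omega>) \<bullet> gstar\<bar> \<le> bX) \<and>
     design_cond M (\<lambda>\<omega>. drop_coord idx (X \<omega>)) s bX m4"

end

theory Submission
  imports Defs
begin

(* Conditionally on X = x, the score e(beta) has mean
   E[(Y - t) 1(Y <= t) | x] + tau t - tau x'theta0, where t = x'beta and beta0, theta0 are the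
   true parameters. The expected-shortfall identity, obtained from the quantile transform, gives
   tau x'theta0 = E[Y 1(Y <= x'beta0) | x], so the conditional mean is the integral of
   (y - t)(1(y <= t) - 1(y <= x'beta0)): a ramp supported between x'beta0 and t. As the
   conditional CDF is f_u-Lipschitz at x'beta0, the modulus of this integral is at most
   f_u (x'delta)^2 / 2, where delta = beta - beta0. Disintegrating along X,
   |E e(beta) g(X)| <= f_u/2 E[(X'delta)^2 |g(X)|] for continuous g.
   For the unit direction u of E e(beta) W, the choice g(x) = x'Sigma^(-1/2) u and Young's
   inequality a^2 c <= 2a^3/3 + c^3/3 bound this by f_u m_3 |delta|_Sigma^2 / 2; for
   g = omega one uses |omega| <= b_X instead. The first inequality holds because
   Sigma_(-j)^(-1/2) P'v is never longer than Sigma^(-1/2) v, for P the coordinate embedding. *)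

section \<open>Ramps under a measure with controlled interval masses\<close>

text \<open>By Tonelli, the integral of the ramp is the integral over [a,b] of the masses of the
  intervals between a and s (between s and b for the lower ramp).\<close>
lemma nn_integral_upper_ramp_le:
  fixes \<nu> :: "real measure" and a b L :: real
  assumes "prob_space \<nu>" and sets_\<nu>: "sets \<nu> = sets borel" and "a \<le> b"
    and mass: "\<And>s. a \<le> s \<Longrightarrow> s \<le> b \<Longrightarrow> measure \<nu> {a<..s} \<le> L * (s - a)"
  shows "(\<integral>\<^sup>+y. ennreal ((b - y) * indicator {a<..b} y) \<partial>\<nu>) \<le> ennreal (L * (b - a)^2 / 2)"
proof -
  interpret prob_space \<nu> by fact
  interpret pair_sigma_finite lborel \<nu> by unfold_locales
  define A where "A = {(s, y). a < y \<and> y \<le> s \<and> s \<le> (b::real)}"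
  have "A = {p \<in> space (borel \<Otimes>\<^sub>M borel). a < snd p \<and> snd p \<le> fst p \<and> fst p \<le> b}"
    by (auto simp: A_def space_pair_measure)
  then have A: "A \<in> sets (lborel \<Otimes>\<^sub>M \<nu>)"
    unfolding sets_pair_measure_cong[OF sets_lborel sets_\<nu>] by simp
  have "ennreal ((b - y) * indicator {a<..b} y) = emeasure lborel ((\<lambda>s. (s, y)) -` A)" for y
  proof -
    have "(\<lambda>s. (s, y)) -` A = (if a < y \<and> y \<le> b then {y..b} else {})" by (auto simp: A_def)
    then show ?thesis by (simp add: indicator_def)
  qed
  then have "(\<integral>\<^sup>+y. ennreal ((b - y) * indicator {a<..b} y) \<partial>\<nu>) = emeasure (lborel \<Otimes>\<^sub>M \<nu>) A"
    by (simp add: emeasure_pair_measure_alt2[OF A])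
  also have "\<dots> = (\<integral>\<^sup>+s. emeasure \<nu> (Pair s -` A) \<partial>lborel)"
    by (rule sigma_finite_measure.emeasure_pair_measure_alt[OF prob_space_imp_sigma_finite[OF assms(1)] A])
  also have "\<dots> \<le> (\<integral>\<^sup>+s. ennreal (L * (s - a)) * indicator {a..b} s \<partial>lborel)"
  proof (rule nn_integral_mono)
    fix s
    have "Pair s -` A = (if s \<le> b then {a<..s} else {})" by (auto simp: A_def)
    then show "emeasure \<nu> (Pair s -` A) \<le> ennreal (L * (s - a)) * indicator {a..b} s"
      by (auto simp: emeasure_eq_measure indicator_def mass intro!: ennreal_leI)
  qed
  also have "\<dots> = ennreal (L * (b - a)^2 / 2)"
  proof (rule nn_integral_has_integral_lebesgue')
    show "0 \<le> L * (s - a)" if "s \<in> {a..b}" for s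
      using order_trans[OF measure_nonneg mass[of s]] that by simp
    have "((\<lambda>s. L * (s - a)) has_integral (L * (b - a)^2 / 2 - L * (a - a)^2 / 2)) {a..b}"
      by (rule fundamental_theorem_of_calculus[OF \<open>a \<le> b\<close>])
         (auto intro!: derivative_eq_intros simp: has_real_derivative_iff_has_vector_derivative[symmetric])
    then show "((\<lambda>s. L * (s - a)) has_integral (L * (b - a)^2 / 2)) {a..b}" by simp
  qed
  finally show ?thesis .
qed

lemma nn_integral_lower_ramp_le:
  fixes \<nu> :: "real measure" and a b L :: real
  assumes "prob_space \<nu>" and sets_\<nu>: "sets \<nu> = sets borel" and "a \<le> b"
    and mass: "\<And>s. a \<le> s \<Longrightarrow> s \<le> b \<Longrightarrow> measure \<nu> {s<..b} \<le> L * (b - s)"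
  shows "(\<integral>\<^sup>+y. ennreal ((y - a) * indicator {a<..b} y) \<partial>\<nu>) \<le> ennreal (L * (b - a)^2 / 2)"
proof -
  interpret prob_space \<nu> by fact
  interpret pair_sigma_finite lborel \<nu> by unfold_locales
  define A where "A = {(s, y). a \<le> s \<and> s < y \<and> y \<le> (b::real)}"
  have "A = {p \<in> space (borel \<Otimes>\<^sub>M borel). a \<le> fst p \<and> fst p < snd p \<and> snd p \<le> b}"
    by (auto simp: A_def space_pair_measure)
  then have A: "A \<in> sets (lborel \<Otimes>\<^sub>M \<nu>)"
    unfolding sets_pair_measure_cong[OF sets_lborel sets_\<nu>] by simp
  have "ennreal ((y - a) * indicator {a<..b} y) = emeasure lborel ((\<lambda>s. (s, y)) -` A)" for y
  proof -
    have "(\<lambda>s. (s, y)) -` A = (if a < y \<and> y \<le> b then {a..<y} else {})" by (auto simp: A_def)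
    then show ?thesis by (simp add: indicator_def)
  qed
  then have "(\<integral>\<^sup>+y. ennreal ((y - a) * indicator {a<..b} y) \<partial>\<nu>) = emeasure (lborel \<Otimes>\<^sub>M \<nu>) A"
    by (simp add: emeasure_pair_measure_alt2[OF A])
  also have "\<dots> = (\<integral>\<^sup>+s. emeasure \<nu> (Pair s -` A) \<partial>lborel)"
    by (rule sigma_finite_measure.emeasure_pair_measure_alt[OF prob_space_imp_sigma_finite[OF assms(1)] A])
  also have "\<dots> \<le> (\<integral>\<^sup>+s. ennreal (L * (b - s)) * indicator {a..b} s \<partial>lborel)"
  proof (rule nn_integral_mono)
    fix s
    have "Pair s -` A = (if a \<le> s then {s<..b} else {})" by (auto simp: A_def)
    then show "emeasure \<nu> (Pair s -` A) \<le> ennreal (L * (b - s)) * indicator {a..b} s"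
      by (auto simp: emeasure_eq_measure indicator_def mass intro!: ennreal_leI)
  qed
  also have "\<dots> = ennreal (L * (b - a)^2 / 2)"
  proof (rule nn_integral_has_integral_lebesgue')
    show "0 \<le> L * (b - s)" if "s \<in> {a..b}" for s
      using order_trans[OF measure_nonneg mass[of s]] that by simp
    have "((\<lambda>s. L * (b - s)) has_integral (- L * (b - b)^2 / 2 - (- L * (b - a)^2 / 2))) {a..b}"
      by (rule fundamental_theorem_of_calculus[OF \<open>a \<le> b\<close>])
         (auto intro!: derivative_eq_intros simp: has_real_derivative_iff_has_vector_derivative[symmetric] field_simps)
    then show "((\<lambda>s. L * (b - s)) has_integral (L * (b - a)^2 / 2)) {a..b}" by simp
  qed
  finally show ?thesis .
qed

section \<open>Quantiles and the score of a single distribution\<close>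

context cdf_distribution
begin

lemma cdf_quantile_eq:
  assumes cont: "isCont C (I \<tau>)" and "0 < \<tau>" "\<tau> < 1"
  shows "C (I \<tau>) = \<tau>"
proof (rule antisym)
  have below: "C s < \<tau>" if "s < I \<tau>" for s
    using pseudoinverse[of \<tau> s] assms that by auto
  show "C (I \<tau>) \<le> \<tau>"
  proof (rule tendsto_upperbound)
    show "(C \<longlongrightarrow> C (I \<tau>)) (at_left (I \<tau>))"
      using cont unfolding isCont_def by (rule tendsto_within_subset) simp
    show "\<forall>\<^sub>F s in at_left (I \<tau>). C s \<le> \<tau>"
      using eventually_at_left_real[of "I \<tau> - 1" "I \<tau>"] by (rule eventually_mono) (auto intro: below less_imp_le)
  qed simp
  show "\<tau> \<le> C (I \<tau>)" using pseudoinverse[of \<tau> "I \<tau>"] assms by simp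
qed

text \<open>Quantile transform: I maps the uniform distribution on (0,1) to M.\<close>
lemma set_integral_quantile_eq:
  assumes "0 < \<tau>" "\<tau> < 1" and C_eq: "C (I \<tau>) = \<tau>"
    and int: "integrable M (\<lambda>y. y * indicator {..I \<tau>} y)"
  shows "(LINT u:{0..\<tau>}|lborel. I u) = (\<integral>y. y * indicator {..I \<tau>} y \<partial>M)"
proof -
  let ?\<Omega> = "restrict_space lborel {0<..<1::real}"
  let ?f = "\<lambda>y. y * indicator {..I \<tau>} y"
  have sets_\<Omega>: "sets ?\<Omega> = sets (restrict_space borel {0<..<1::real})" by (simp add: sets_restrict_space)
  have I_meas: "I \<in> borel_measurable ?\<Omega>" using measurable_CI unfolding measurable_cong_sets[OF sets_\<Omega> refl] .
  have f_meas: "?f \<in> borel_measurable borel" by measurable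
  have int_\<Omega>: "integrable lborel (\<lambda>u. indicator {0<..<1} u *\<^sub>R ?f (I u))"
  proof -
    have "integrable ?\<Omega> (\<lambda>u. ?f (I u))"
      using int distr_I_eq_M integrable_distr_eq[OF I_meas f_meas] by simp
    then show ?thesis by (subst (asm) integrable_restrict_space) simp_all
  qed
  have "(\<integral>y. ?f y \<partial>M) = (\<integral>u. ?f (I u) \<partial>?\<Omega>)"
    using distr_I_eq_M integral_distr[OF I_meas f_meas] by simp
  also have "\<dots> = (\<integral>u. indicator {0<..<1} u *\<^sub>R ?f (I u) \<partial>lborel)"
    by (rule integral_restrict_space) simp
  finally have lhs: "(\<integral>y. ?f y \<partial>M) = (\<integral>u. indicator {0<..<1} u *\<^sub>R ?f (I u) \<partial>lborel)" .
  have split: "indicator {0..\<tau>} u *\<^sub>R I u = indicator {0<..<1} u *\<^sub>R ?f (I u) + indicator {0} u * I 0" for u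
  proof -
    have "u \<le> \<tau> \<longleftrightarrow> I u \<le> I \<tau>" if "0 < u" "u < 1" using pseudoinverse[of u "I \<tau>"] that C_eq by simp
    then show ?thesis using assms(1,2) by (auto simp: indicator_def)
  qed
  have int_0: "integrable lborel (\<lambda>u. indicator {0} u * I 0 :: real)"
    by (intro Bochner_Integration.integrable_mult_left integrable_real_indicator) (auto simp: emeasure_eq_measure)
  have zero: "(\<integral>u. indicator {0} u * I 0 \<partial>lborel) = 0"
    by (rule integral_eq_zero_AE) (use AE_lborel_singleton[of 0] in \<open>auto elim!: eventually_mono\<close>)
  show ?thesis
    unfolding set_lebesgue_integral_def split lhs using Bochner_Integration.integral_add[OF int_\<Omega> int_0] zero by simp
qed

lemma hinge_difference_bound:
  assumes lip: "\<And>s. \<bar>C s - C t0\<bar> \<le> L * \<bar>s - t0\<bar>"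
  shows "integrable M (\<lambda>y. (y - t) * (indicator {..t} y - indicator {..t0} y))"
    and "\<bar>\<integral>y. (y - t) * (indicator {..t} y - indicator {..t0} y) \<partial>M\<bar> \<le> L * (t - t0)^2 / 2"
proof -
  have L: "0 \<le> L" using lip[of "t0 + 1"] by simp
  define g where "g y = (if t0 \<le> t then (t - y) * indicator {t0<..t} y else (y - t) * indicator {t<..t0} y)" for y
  have diff_eq: "(\<lambda>y. (y - t) * (indicator {..t} y - indicator {..t0} y)) = (\<lambda>y. - g y)"
    by (auto simp: fun_eq_iff g_def indicator_def)
  have g_bound: "0 \<le> g y" "g y \<le> \<bar>t - t0\<bar>" for y by (auto simp: g_def indicator_def)
  have "random_variable borel g" unfolding g_def[abs_def] by measurable
  then have int_g: "integrable M g"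
    by (rule integrable_const_bound[where B="\<bar>t - t0\<bar>", rotated]) (simp add: g_bound abs_of_nonneg)
  have "(\<integral>\<^sup>+y. ennreal (g y) \<partial>M) \<le> ennreal (L * (t - t0)^2 / 2)"
  proof (cases "t0 \<le> t")
    case True
    have "measure M {t0<..s} \<le> L * (s - t0)" if "t0 \<le> s" for s
      using lip[of s] that cdf_diff_eq[of t0 s] by (cases "s = t0") (auto simp: cdf_def2 abs_le_iff)
    from nn_integral_upper_ramp_le[OF prob_space_axioms events_eq_borel True this] True
    show ?thesis by (simp add: g_def)
  next
    case False
    have "measure M {s<..t0} \<le> L * (t0 - s)" if "s \<le> t0" for s
      using lip[of s] that cdf_diff_eq[of s t0] by (cases "s = t0") (auto simp: cdf_def2 abs_le_iff)
    from nn_integral_lower_ramp_le[OF prob_space_axioms events_eq_borel _ this] False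
    show ?thesis by (simp add: g_def power2_commute)
  qed
  then have "integral\<^sup>L M g \<le> L * (t - t0)^2 / 2"
    using nn_integral_eq_integral[OF int_g] g_bound L by (simp add: ennreal_le_iff)
  moreover have "0 \<le> integral\<^sup>L M g" using g_bound by simp
  ultimately show "\<bar>\<integral>y. (y - t) * (indicator {..t} y - indicator {..t0} y) \<partial>M\<bar> \<le> L * (t - t0)^2 / 2"
    unfolding diff_eq by simp
  show "integrable M (\<lambda>y. (y - t) * (indicator {..t} y - indicator {..t0} y))"
    unfolding diff_eq using int_g by simp
qed

lemma QES_score_bound:
  fixes t \<tau> L :: real
  assumes cont: "isCont C (I \<tau>)" and lip: "\<And>s. \<bar>C s - C (I \<tau>)\<bar> \<le> L * \<bar>s - I \<tau>\<bar>"
    and "0 < \<tau>" "\<tau> < 1" and int: "integrable M (\<lambda>y. min (y - I \<tau>) 0)"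
  defines "score \<equiv> \<lambda>y. (y - t) * indicator {..t} y + \<tau> * t - (LINT u:{0..\<tau>}|lborel. I u)"
  shows "integrable M score" and "\<bar>integral\<^sup>L M score\<bar> \<le> L * (t - I \<tau>)^2 / 2"
proof -
  let ?q = "I \<tau>"
  let ?R = "\<lambda>y. (y - t) * (indicator {..t} y - indicator {..?q} y)"
  have C_q: "C ?q = \<tau>" by (rule cdf_quantile_eq) fact+
  have tail_eq: "y * indicator {..?q} y = min (y - ?q) 0 + ?q * indicator {..?q} y" for y
    by (auto simp: indicator_def)
  have int_tail: "integrable M (\<lambda>y. y * indicator {..?q} y)"
    unfolding tail_eq using int by (intro Bochner_Integration.integrable_add) (auto simp: emeasure_eq_measure)
  have int_tail_t: "integrable M (\<lambda>y. (y - t) * indicator {..?q} y)"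
    using int_tail by (simp add: left_diff_distrib emeasure_eq_measure)
  have shortfall: "(LINT u:{0..\<tau>}|lborel. I u) = (\<integral>y. (y - t) * indicator {..?q} y \<partial>M) + t * \<tau>"
    using set_integral_quantile_eq[OF assms(3,4) C_q int_tail] int_tail C_q
    by (simp add: left_diff_distrib emeasure_eq_measure cdf_def2)
  have score_eq: "score y = ?R y + (y - t) * indicator {..?q} y + \<tau> * t - (LINT u:{0..\<tau>}|lborel. I u)" for y
    by (simp add: score_def algebra_simps)
  show int_score: "integrable M score"
    unfolding score_eq using hinge_difference_bound(1)[OF lip] int_tail_t by simp
  have "integral\<^sup>L M score = integral\<^sup>L M ?R"
    unfolding score_eq shortfall using hinge_difference_bound(1)[OF lip] int_tail_t
    by (simp add: prob_space[unfolded borel_UNIV])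
  then show "\<bar>integral\<^sup>L M score\<bar> \<le> L * (t - ?q)^2 / 2"
    using hinge_difference_bound(2)[OF lip] by simp
qed

end

section \<open>Disintegration along a regular conditional distribution\<close>

lemma enn2real_nn_integral_bind:
  fixes g :: "'b \<Rightarrow> ennreal"
  assumes \<kappa>[measurable]: "\<kappa> \<in> L \<rightarrow>\<^sub>M subprob_algebra N" and g[measurable]: "g \<in> borel_measurable N"
    and finite: "(\<integral>\<^sup>+y. g y \<partial>(L \<bind> \<kappa>)) < \<infinity>"
  shows "AE x in L. (\<integral>\<^sup>+y. g y \<partial>\<kappa> x) < \<infinity>"
    and "integrable L (\<lambda>x. enn2real (\<integral>\<^sup>+y. g y \<partial>\<kappa> x))"
    and "enn2real (\<integral>\<^sup>+y. g y \<partial>(L \<bind> \<kappa>)) = (\<integral>x. enn2real (\<integral>\<^sup>+y. g y \<partial>\<kappa> x) \<partial>L)"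
proof -
  define h where "h x = (\<integral>\<^sup>+y. g y \<partial>\<kappa> x)" for x
  have [measurable]: "h \<in> borel_measurable L" unfolding h_def by measurable
  have total: "(\<integral>\<^sup>+y. g y \<partial>(L \<bind> \<kappa>)) = (\<integral>\<^sup>+x. h x \<partial>L)"
    unfolding h_def by (rule nn_integral_bind[OF g \<kappa>])
  show AE_finite: "AE x in L. h x < \<infinity>"
    using nn_integral_PInf_AE[of h L] finite total by (simp add: top.not_eq_extremum)
  then have h_eq: "AE x in L. h x = ennreal (enn2real (h x))"
    by eventually_elim (simp add: ennreal_enn2real_if)
  have "(\<integral>\<^sup>+x. ennreal (norm (enn2real (h x))) \<partial>L) = (\<integral>\<^sup>+x. h x \<partial>L)"
    using h_eq by (intro nn_integral_cong_AE) auto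
  then show "integrable L (\<lambda>x. enn2real (h x))"
    using finite total by (intro integrableI_bounded) simp_all
  show "enn2real (\<integral>\<^sup>+y. g y \<partial>(L \<bind> \<kappa>)) = (\<integral>x. enn2real (h x) \<partial>L)"
    unfolding total by (rule enn2real_nn_integral_eq_integral[OF h_eq]) simp_all
qed

lemma integral_bind_unbounded:
  fixes f :: "'b \<Rightarrow> real"
  assumes \<kappa>[measurable]: "\<kappa> \<in> L \<rightarrow>\<^sub>M subprob_algebra N"
    and f[measurable]: "f \<in> borel_measurable N" and int: "integrable (L \<bind> \<kappa>) f"
  shows "integral\<^sup>L (L \<bind> \<kappa>) f = (\<integral>x. integral\<^sup>L (\<kappa> x) f \<partial>L)"
proof -
  have norm_finite: "(\<integral>\<^sup>+y. ennreal (norm (f y)) \<partial>(L \<bind> \<kappa>)) < \<infinity>"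
    using int by (simp add: integrable_iff_bounded)
  have part_finite: "(\<integral>\<^sup>+y. ennreal (s * f y) \<partial>(L \<bind> \<kappa>)) < \<infinity>" if "\<bar>s\<bar> = 1" for s
  proof (rule le_less_trans[OF nn_integral_mono norm_finite])
    show "ennreal (s * f y) \<le> ennreal (norm (f y))" for y
      using that abs_ge_self[of "s * f y"] by (intro ennreal_leI) (simp add: abs_mult)
  qed
  have norm_meas: "(\<lambda>y. ennreal (norm (f y))) \<in> borel_measurable N" by measurable
  have part_meas: "(\<lambda>y. ennreal (s * f y)) \<in> borel_measurable N" for s by measurable
  note pos = enn2real_nn_integral_bind[OF \<kappa> part_meas part_finite[of 1], simplified]
    and neg = enn2real_nn_integral_bind[OF \<kappa> part_meas part_finite[of "-1"], simplified]
  have integrable_\<kappa>: "integrable (\<kappa> x) f" if "x \<in> space L" "(\<integral>\<^sup>+y. ennreal (norm (f y)) \<partial>\<kappa> x) < \<infinity>" for x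
    using that f by (intro integrableI_bounded) (simp_all add: measurable_cong_sets[OF sets_kernel[OF \<kappa>]])
  have AE_int: "AE x in L. integrable (\<kappa> x) f"
    using enn2real_nn_integral_bind(1)[OF \<kappa> norm_meas norm_finite] AE_space
    by eventually_elim (simp add: integrable_\<kappa>)
  have "integral\<^sup>L (L \<bind> \<kappa>) f
      = enn2real (\<integral>\<^sup>+y. ennreal (f y) \<partial>(L \<bind> \<kappa>)) - enn2real (\<integral>\<^sup>+y. ennreal (- f y) \<partial>(L \<bind> \<kappa>))"
    by (rule real_lebesgue_integral_def[OF int])
  also have "\<dots> = (\<integral>x. enn2real (\<integral>\<^sup>+y. ennreal (f y) \<partial>\<kappa> x) - enn2real (\<integral>\<^sup>+y. ennreal (- f y) \<partial>\<kappa> x) \<partial>L)"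
    using pos neg by simp
  also have "\<dots> = (\<integral>x. integral\<^sup>L (\<kappa> x) f \<partial>L)"
    using AE_int by (intro integral_cong_AE) (auto elim!: eventually_mono simp: real_lebesgue_integral_def)
  finally show ?thesis .
qed

locale regular_cond_distr = prob_space M for M :: "'a measure" +
  fixes X :: "'a \<Rightarrow> real^'n" and Y :: "'a \<Rightarrow> real" and K :: "real^'n \<Rightarrow> real measure"
  assumes X_measurable[measurable]: "X \<in> borel_measurable M"
    and Y_measurable[measurable]: "Y \<in> borel_measurable M"
    and cond_distr: "is_cond_distr M X Y K"
begin

abbreviation "P\<^sub>X \<equiv> distr M borel X"

abbreviation "XY_space \<equiv> (borel \<Otimes>\<^sub>M borel :: ((real^'n) \<times> real) measure)"

lemma K_measurable[measurable]: "K \<in> borel \<rightarrow>\<^sub>M subprob_algebra borel"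
  using cond_distr by (simp add: is_cond_distr_def measurable_prob_algebraD)

lemma prob_space_K: "prob_space (K x)" and sets_K: "sets (K x) = sets borel"
proof -
  have "K x \<in> space (prob_algebra borel)"
    using cond_distr by (auto simp: is_cond_distr_def intro: measurable_space)
  then show "prob_space (K x)" "sets (K x) = sets borel" by (auto simp: space_prob_algebra)
qed

lemma Pair_measurable_K: "Pair x \<in> K x \<rightarrow>\<^sub>M XY_space"
  unfolding measurable_cong_sets[OF sets_K refl] by measurable

lemma fibre_kernel_measurable: "(\<lambda>x. distr (K x) XY_space (Pair x)) \<in> P\<^sub>X \<rightarrow>\<^sub>M subprob_algebra XY_space"
proof -
  have "case_prod Pair \<in> XY_space \<rightarrow>\<^sub>M XY_space" by (simp add: case_prod_Pair_iden[abs_def])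
  then show ?thesis
    unfolding measurable_cong_sets[OF sets_distr refl] by (rule measurable_distr2) simp
qed

lemma emeasure_fibre_Times:
  assumes "a \<in> sets borel" "b \<in> sets borel"
  shows "emeasure (distr (K x) XY_space (Pair x)) (a \<times> b) = ennreal (indicator a x * measure (K x) b)"
proof -
  interpret Kx: prob_space "K x" by (rule prob_space_K)
  have "emeasure (distr (K x) XY_space (Pair x)) (a \<times> b) = emeasure (K x) (Pair x -` (a \<times> b) \<inter> space (K x))"
    using assms by (intro emeasure_distr Pair_measurable_K) auto
  also have "Pair x -` (a \<times> b) \<inter> space (K x) = (if x \<in> a then b else {})"
    using sets_eq_imp_space_eq[OF sets_K] by auto
  finally show ?thesis by (simp add: Kx.emeasure_eq_measure)
qed

lemma joint_distr_eq_bind: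
  "distr M XY_space (\<lambda>\<omega>. (X \<omega>, Y \<omega>)) = P\<^sub>X \<bind> (\<lambda>x. distr (K x) XY_space (Pair x))"
proof (rule measure_eqI_generator_eq[OF Int_stable_pair_measure_generator[of borel borel]])
  let ?E = "{a \<times> b | a b. a \<in> sets (borel :: (real^'n) measure) \<and> b \<in> sets (borel :: real measure)}"
  let ?\<kappa> = "\<lambda>x. distr (K x) XY_space (Pair x)"
  interpret PX: prob_space P\<^sub>X by (rule prob_space_distr) simp
  show "?E \<subseteq> Pow (space borel \<times> space borel)" by simp
  show "sets (distr M XY_space (\<lambda>\<omega>. (X \<omega>, Y \<omega>))) = sigma_sets (space borel \<times> space borel) ?E"
    by (simp add: sets_pair_measure)
  show "sets (P\<^sub>X \<bind> ?\<kappa>) = sigma_sets (space borel \<times> space borel) ?E"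
    using sets_bind_measurable[OF fibre_kernel_measurable] by (simp add: sets_pair_measure)
  show "range (\<lambda>_. UNIV) \<subseteq> ?E" by auto (metis UNIV_Times_UNIV sets.top space_borel)
  show "(\<Union>i::nat. UNIV) = space borel \<times> space borel" by simp
  show "emeasure (distr M XY_space (\<lambda>\<omega>. (X \<omega>, Y \<omega>))) UNIV \<noteq> \<infinity>"
  proof -
    interpret XY: prob_space "distr M XY_space (\<lambda>\<omega>. (X \<omega>, Y \<omega>))" by (rule prob_space_distr) simp
    show ?thesis using XY.emeasure_space_1 by (simp add: space_pair_measure)
  qed
  fix Z assume "Z \<in> ?E"
  then obtain a b where Z: "Z = a \<times> b" and a: "a \<in> sets borel" and b: "b \<in> sets borel" by auto
  have "emeasure (distr M XY_space (\<lambda>\<omega>. (X \<omega>, Y \<omega>))) Z = ennreal (measure M {\<omega> \<in> space M. X \<omega> \<in> a \<and> Y \<omega> \<in> b})"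
    using a b unfolding Z by (subst emeasure_distr) (auto simp: emeasure_eq_measure intro!: arg_cong[where f=prob])
  also have "\<dots> = ennreal (\<integral>x. indicator a x * measure (K x) b \<partial>P\<^sub>X)"
    using cond_distr a b by (simp add: is_cond_distr_def)
  also have "\<dots> = (\<integral>\<^sup>+x. ennreal (indicator a x * measure (K x) b) \<partial>P\<^sub>X)"
  proof (rule nn_integral_eq_integral[symmetric])
    have "(\<lambda>x. measure (K x) b) \<in> borel_measurable borel"
      using measurable_compose[OF K_measurable measurable_measure_subprob_algebra[OF b]] .
    then show "integrable P\<^sub>X (\<lambda>x. indicator a x * measure (K x) b)"
      using a by (intro PX.integrable_const_bound[where B=1])
        (auto simp: indicator_def intro!: prob_space.prob_le_1[OF prob_space_K])
  qed simp
  also have "\<dots> = emeasure (P\<^sub>X \<bind> ?\<kappa>) Z"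
    using a b unfolding Z by (simp add: emeasure_bind[OF _ fibre_kernel_measurable] emeasure_fibre_Times)
  finally show "emeasure (distr M XY_space (\<lambda>\<omega>. (X \<omega>, Y \<omega>))) Z = emeasure (P\<^sub>X \<bind> ?\<kappa>) Z" .
qed

lemma nn_integral_disintegration:
  fixes f :: "(real^'n) \<times> real \<Rightarrow> ennreal"
  assumes [measurable]: "f \<in> borel_measurable XY_space"
  shows "(\<integral>\<^sup>+\<omega>. f (X \<omega>, Y \<omega>) \<partial>M) = (\<integral>\<^sup>+x. (\<integral>\<^sup>+y. f (x, y) \<partial>K x) \<partial>P\<^sub>X)"
proof -
  have "(\<integral>\<^sup>+\<omega>. f (X \<omega>, Y \<omega>) \<partial>M) = (\<integral>\<^sup>+p. f p \<partial>(P\<^sub>X \<bind> (\<lambda>x. distr (K x) XY_space (Pair x))))"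
    unfolding joint_distr_eq_bind[symmetric] by (rule nn_integral_distr[symmetric]) measurable
  also have "\<dots> = (\<integral>\<^sup>+x. (\<integral>\<^sup>+y. f (x, y) \<partial>K x) \<partial>P\<^sub>X)"
    by (simp add: nn_integral_bind[OF _ fibre_kernel_measurable] nn_integral_distr[OF Pair_measurable_K])
  finally show ?thesis .
qed

lemma integral_disintegration:
  fixes f :: "(real^'n) \<times> real \<Rightarrow> real"
  assumes f[measurable]: "f \<in> borel_measurable XY_space" and int: "integrable M (\<lambda>\<omega>. f (X \<omega>, Y \<omega>))"
  shows "(\<integral>\<omega>. f (X \<omega>, Y \<omega>) \<partial>M) = (\<integral>x. (\<integral>y. f (x, y) \<partial>K x) \<partial>P\<^sub>X)"
proof -
  let ?\<kappa> = "\<lambda>x. distr (K x) XY_space (Pair x)"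
  have XY_meas: "(\<lambda>\<omega>. (X \<omega>, Y \<omega>)) \<in> M \<rightarrow>\<^sub>M XY_space" by measurable
  have int_bind: "integrable (P\<^sub>X \<bind> ?\<kappa>) f"
    using int integrable_distr_eq[OF XY_meas f] by (simp add: joint_distr_eq_bind)
  have "(\<integral>\<omega>. f (X \<omega>, Y \<omega>) \<partial>M) = integral\<^sup>L (P\<^sub>X \<bind> ?\<kappa>) f"
    by (simp add: integral_distr[OF XY_meas f, symmetric] joint_distr_eq_bind)
  also have "\<dots> = (\<integral>x. (\<integral>y. f (x, y) \<partial>K x) \<partial>P\<^sub>X)"
    by (simp add: integral_bind_unbounded[OF fibre_kernel_measurable f int_bind]
        integral_distr[OF Pair_measurable_K f])
  finally show ?thesis .
qed

end

section \<open>Square roots of second moment matrices\<close>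

lemma matrix_vector_mult_inner_transpose:
  fixes A :: "real^'n^'m"
  shows "(A *v x) \<bullet> y = x \<bullet> (transpose A *v y)"
proof -
  have "(A *v x) \<bullet> y = y \<bullet> (A *v x)" by (simp add: inner_commute)
  also have "\<dots> = (y v* A) \<bullet> x" by (simp add: dot_lmul_matrix)
  also have "y v* A = transpose A *v y" by simp
  finally show ?thesis by (simp add: inner_commute)
qed

lemma is_psd_sqrt_matrix_inv:
  fixes S \<Sigma> :: "real^'n^'n"
  assumes "is_psd_sqrt S \<Sigma>"
  shows psd_sqrt_right_inv: "S ** matrix_inv S = mat 1"
    and psd_sqrt_left_inv: "matrix_inv S ** S = mat 1"
    and psd_sqrt_inv_symmetric: "transpose (matrix_inv S) = matrix_inv S"
proof -
  have sym: "transpose S = S" and pd: "pos_def_mat S" using assms by (auto simp: is_psd_sqrt_def)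
  have "x = 0" if "S *v x = 0" for x
    using pd that unfolding pos_def_mat_def by force
  then have "invertible S"
    using matrix_left_invertible_ker invertible_left_inverse by blast
  then have inv: "S ** matrix_inv S = mat 1 \<and> matrix_inv S ** S = mat 1"
    unfolding invertible_def matrix_inv_def by (rule someI_ex)
  then show right: "S ** matrix_inv S = mat 1" and "matrix_inv S ** S = mat 1" by auto
  have "transpose (matrix_inv S) ** S = mat 1"
    by (metis right sym matrix_transpose_mul transpose_mat)
  then show "transpose (matrix_inv S) = matrix_inv S"
    by (metis inv matrix_mul_assoc matrix_mul_lid matrix_mul_rid)
qed

lemma norm_psd_sqrt_mult_squared:
  assumes "is_psd_sqrt S \<Sigma>"
  shows "(norm (S *v v))^2 = v \<bullet> (\<Sigma> *v v)"
  using assms matrix_vector_mult_inner_transpose[of S v "S *v v"]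
  by (simp add: is_psd_sqrt_def power2_norm_eq_inner matrix_vector_mul_assoc)

lemma psd_sqrt_mult_eq_0_iff:
  assumes "is_psd_sqrt S \<Sigma>"
  shows "S *v d = 0 \<longleftrightarrow> d = 0"
  by (metis assms psd_sqrt_left_inv matrix_vector_mul_assoc matrix_vector_mul_lid matrix_vector_mult_0_right)

text \<open>Nonnegativity of the squared norm of S\<inverse>v - Sz gives 2 z\<bullet>v - z\<bullet>\<Sigma>z \<le> |S\<inverse>v|^2.
  At z = P T\<inverse>T\<inverse>P' v, with P the coordinate embedding, both terms on the left equal
  |T\<inverse>P' v|^2.\<close>
definition coord_embedding :: "('q \<Rightarrow> 'p) \<Rightarrow> real^'q^'p" where
  "coord_embedding idx = (\<chi> i k. if idx k = i then 1 else 0)"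

lemma drop_coord_eq_transpose_embedding: "drop_coord idx v = transpose (coord_embedding idx) *v v"
  by (simp add: drop_coord_def coord_embedding_def vec_eq_iff matrix_vector_mult_def transpose_def
      if_distrib[of "\<lambda>c. c * _"] cong: if_cong)

lemma principal_submatrix_eq_embedding:
  "(\<chi> k l. \<Sigma> $ idx k $ idx l) = transpose (coord_embedding idx) ** \<Sigma> ** coord_embedding idx"
  by (simp add: coord_embedding_def vec_eq_iff matrix_matrix_mult_def transpose_def
      if_distrib[of "\<lambda>c. c * _"] if_distrib[of "\<lambda>c. _ * c"] cong: if_cong)

lemma norm_inv_sqrt_submatrix_le:
  fixes S \<Sigma> :: "real^'p^'p" and T :: "real^'q^'q" and idx :: "'q \<Rightarrow> 'p"
  assumes S: "is_psd_sqrt S \<Sigma>" and T: "is_psd_sqrt T (\<chi> k l. \<Sigma> $ idx k $ idx l)"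
  shows "norm (matrix_inv T *v drop_coord idx v) \<le> norm (matrix_inv S *v v)"
proof -
  define P where "P = coord_embedding idx"
  define w where "w = matrix_inv T *v drop_coord idx v"
  define u where "u = matrix_inv T *v w"
  define z where "z = P *v u"
  have sym_S: "transpose S = S" and SS: "S ** S = \<Sigma>" using S by (auto simp: is_psd_sqrt_def)
  have sym_T: "transpose T = T" and TT: "T ** T = transpose P ** \<Sigma> ** P"
    using T by (auto simp: is_psd_sqrt_def P_def principal_submatrix_eq_embedding)
  have drop_eq: "drop_coord idx v = transpose P *v v"
    unfolding P_def by (rule drop_coord_eq_transpose_embedding)
  have cross: "(matrix_inv S *v v) \<bullet> (S *v z) = z \<bullet> v"
    using matrix_vector_mult_inner_transpose[of S z "matrix_inv S *v v"] sym_S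
    by (simp add: inner_commute matrix_vector_mul_assoc psd_sqrt_right_inv[OF S])
  have square: "(S *v z) \<bullet> (S *v z) = z \<bullet> (\<Sigma> *v z)"
    using matrix_vector_mult_inner_transpose[of S z "S *v z"] sym_S by (simp add: matrix_vector_mul_assoc SS)
  have "0 \<le> (norm (matrix_inv S *v v - S *v z))^2" by simp
  also have "\<dots> = (norm (matrix_inv S *v v))^2 - 2 * (z \<bullet> v) + z \<bullet> (\<Sigma> *v z)"
    using cross square by (simp add: power2_norm_eq_inner inner_diff_left inner_diff_right inner_commute)
  also have "z \<bullet> v = (norm w)^2"
    using matrix_vector_mult_inner_transpose[of P] matrix_vector_mult_inner_transpose[of "matrix_inv T"]
    by (simp add: z_def u_def w_def drop_eq psd_sqrt_inv_symmetric[OF T] power2_norm_eq_inner)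
  also have "z \<bullet> (\<Sigma> *v z) = (norm w)^2"
  proof -
    have "z \<bullet> (\<Sigma> *v z) = u \<bullet> (transpose P *v (\<Sigma> *v (P *v u)))"
      unfolding z_def by (rule matrix_vector_mult_inner_transpose)
    also have "\<dots> = u \<bullet> (T *v (T *v u))"
      by (simp add: TT matrix_vector_mul_assoc matrix_mul_assoc)
    also have "\<dots> = (T *v u) \<bullet> (T *v u)"
      using matrix_vector_mult_inner_transpose[of T u "T *v u"] sym_T by simp
    also have "T *v u = w"
      by (simp add: u_def matrix_vector_mul_assoc psd_sqrt_right_inv[OF T])
    finally show ?thesis by (simp add: power2_norm_eq_inner)
  qed
  finally have "(norm w)^2 \<le> (norm (matrix_inv S *v v))^2" by simp
  then show ?thesis unfolding w_def by (rule power2_le_imp_le) simp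
qed

lemma bounded_linear_drop_coord: "bounded_linear (drop_coord idx :: real^'p \<Rightarrow> real^'q)"
  unfolding linear_conv_bounded_linear[symmetric] by (rule linearI) (simp_all add: drop_coord_def vec_eq_iff)

lemma second_moment_drop_coord:
  "second_moment M (\<lambda>\<omega>. drop_coord idx (X \<omega>)) = (\<chi> k l. second_moment M X $ idx k $ idx l)"
  by (simp add: second_moment_def drop_coord_def)

section \<open>Moments of a bounded design\<close>

lemma abs_inner_le_l1norm:
  fixes x v :: "real^'n"
  assumes "\<forall>i. \<bar>x $ i\<bar> \<le> b"
  shows "\<bar>x \<bullet> v\<bar> \<le> b * l1norm v"
proof -
  have "\<bar>x \<bullet> v\<bar> = \<bar>\<Sum>i\<in>UNIV. x $ i * v $ i\<bar>" by (simp add: inner_vec_def)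
  also have "\<dots> \<le> (\<Sum>i\<in>UNIV. \<bar>x $ i * v $ i\<bar>)" by (rule sum_abs)
  also have "\<dots> \<le> (\<Sum>i\<in>UNIV. b * \<bar>v $ i\<bar>)"
    by (rule sum_mono) (simp add: abs_mult assms mult_right_mono)
  finally show ?thesis by (simp add: l1norm_def sum_distrib_left)
qed

lemma power2_powr_three_halves: "0 \<le> a \<Longrightarrow> (a^2) powr (3/2) = (a::real)^3"
  by (cases "a = 0") (simp_all add: powr_powr powr_realpow[symmetric] flip: powr_numeral)

lemma sq_mult_le_cubes: "0 \<le> a \<Longrightarrow> 0 \<le> c \<Longrightarrow> a^2 * c \<le> (2/3) * a^3 + (1/3) * (c::real)^3"
proof -
  assume "0 \<le> a" "0 \<le> c"
  then have "0 \<le> (a - c)^2 * (2 * a + c)" by simp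
  moreover have "(2/3) * a^3 + (1/3) * c^3 - a^2 * c = (1/3) * ((a - c)^2 * (2 * a + c))"
    by (simp add: algebra_simps power2_eq_square power3_eq_cube)
  ultimately show ?thesis by linarith
qed

lemma sq_mult_le_weighted_cubes:
  fixes a c p q :: real
  assumes a: "0 < a" and c: "0 < c" and "0 \<le> p" "0 \<le> q"
  shows "p^2 * q \<le> (2/3) * (c / a) * p^3 + (1/3) * (a^2 / c^2) * q^3"
proof -
  have "a^2 * c * ((p / a)^2 * (q / c)) \<le> a^2 * c * ((2/3) * (p / a)^3 + (1/3) * (q / c)^3)"
    using assms by (intro mult_left_mono sq_mult_le_cubes) simp_all
  moreover have "a^2 * c * ((p / a)^2 * (q / c)) = p^2 * q"
    using a c by (simp add: power_divide field_simps)
  moreover have "a^2 * c * ((2/3) * (p / a)^3 + (1/3) * (q / c)^3)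
      = (2/3) * (c / a) * p^3 + (1/3) * (a^2 / c^2) * q^3"
    using a c by (simp add: power_divide field_simps power3_eq_cube power2_eq_square)
  ultimately show ?thesis by simp
qed

lemma integrable_scaleR_bounded:
  fixes e :: "'a \<Rightarrow> real" and F :: "'a \<Rightarrow> 'b::{banach, second_countable_topology}"
  assumes "integrable M e" and "F \<in> borel_measurable M" and "AE \<omega> in M. norm (F \<omega>) \<le> C"
  shows "integrable M (\<lambda>\<omega>. e \<omega> *\<^sub>R F \<omega>)"
proof (rule Bochner_Integration.integrable_bound)
  show "integrable M (\<lambda>\<omega>. \<bar>e \<omega>\<bar> * \<bar>C\<bar>)" using assms(1) by simp
  show "(\<lambda>\<omega>. e \<omega> *\<^sub>R F \<omega>) \<in> borel_measurable M" using assms(1,2) by measurable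
  show "AE \<omega> in M. norm (e \<omega> *\<^sub>R F \<omega>) \<le> norm (\<bar>e \<omega>\<bar> * \<bar>C\<bar>)"
    using assms(3) by eventually_elim (simp add: abs_mult mult_left_mono)
qed

definition cube_moment_ratio :: "'a measure \<Rightarrow> ('a \<Rightarrow> real^'n) \<Rightarrow> real^'n \<Rightarrow> real" where
  "cube_moment_ratio M X u = (\<integral>\<omega>. \<bar>X \<omega> \<bullet> u\<bar>^3 \<partial>M) / ((\<integral>\<omega>. (X \<omega> \<bullet> u)^2 \<partial>M) powr (3/2))"

lemma m3_const_eq_Sup_ratio: "m3_const M X = Sup (cube_moment_ratio M X ` {u. norm u = 1})"
  unfolding m3_const_def cube_moment_ratio_def by (rule arg_cong[where f=Sup]) auto

context
  fixes M :: "'a measure" and X :: "'a \<Rightarrow> real^'n" and bX :: real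
  assumes prob: "prob_space M" and X_measurable[measurable]: "X \<in> borel_measurable M"
    and X_bounded: "AE \<omega> in M. \<forall>i. \<bar>X \<omega> $ i\<bar> \<le> bX"
begin

lemma bounded_continuous_design:
  fixes f :: "real^'n \<Rightarrow> 'b::real_normed_vector"
  assumes "continuous_on UNIV f"
  obtains C where "AE \<omega> in M. norm (f (X \<omega>)) \<le> C"
proof -
  let ?B = "cbox (\<chi> i. - bX) (\<chi> i. bX)"
  have "bounded (f ` ?B)"
    by (intro compact_imp_bounded compact_continuous_image continuous_on_subset[OF assms]) auto
  then obtain C where C: "\<And>x. x \<in> ?B \<Longrightarrow> norm (f x) \<le> C" by (auto simp: bounded_iff)
  have "AE \<omega> in M. norm (f (X \<omega>)) \<le> C"
    using X_bounded
  proof eventually_elim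
    case (elim \<omega>)
    then have "X \<omega> \<in> ?B" by (auto simp: mem_box_cart abs_le_iff) (metis minus_le_iff)
    then show ?case by (rule C)
  qed
  then show ?thesis by (rule that)
qed

lemma integrable_continuous_bounded_design:
  fixes f :: "real^'n \<Rightarrow> real"
  assumes "continuous_on UNIV f"
  shows "integrable M (\<lambda>\<omega>. f (X \<omega>))"
proof -
  interpret prob_space M by (rule prob)
  obtain C where "AE \<omega> in M. norm (f (X \<omega>)) \<le> C" using bounded_continuous_design[OF assms] .
  moreover have "(\<lambda>\<omega>. f (X \<omega>)) \<in> borel_measurable M"
    using borel_measurable_continuous_onI[OF assms] by measurable
  ultimately show ?thesis by (rule integrable_const_bound)
qed

lemma integral_inner_sq: "(\<integral>\<omega>. (X \<omega> \<bullet> v)^2 \<partial>M) = v \<bullet> (second_moment M X *v v)"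
proof -
  have int: "integrable M (\<lambda>\<omega>. X \<omega> $ i * X \<omega> $ k)" for i k
    by (intro integrable_continuous_bounded_design continuous_intros)
  have "(X \<omega> \<bullet> v)^2 = (\<Sum>i\<in>UNIV. \<Sum>k\<in>UNIV. (X \<omega> $ i * X \<omega> $ k) * (v $ i * v $ k))" for \<omega>
    by (simp add: inner_vec_def power2_eq_square sum_product algebra_simps)
  then have "(\<integral>\<omega>. (X \<omega> \<bullet> v)^2 \<partial>M) = (\<Sum>i\<in>UNIV. \<Sum>k\<in>UNIV. (\<integral>\<omega>. X \<omega> $ i * X \<omega> $ k \<partial>M) * (v $ i * v $ k))"
    using int by (simp add: Bochner_Integration.integral_sum)
  also have "\<dots> = v \<bullet> (second_moment M X *v v)"
    by (simp add: second_moment_def inner_vec_def matrix_vector_mult_def sum_distrib_left algebra_simps)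
  finally show ?thesis .
qed

context
  fixes Sh :: "real^'n^'n"
  assumes Sh: "is_psd_sqrt Sh (second_moment M X)"
begin

lemma integral_inner_sq_psd_sqrt: "(\<integral>\<omega>. (X \<omega> \<bullet> v)^2 \<partial>M) = (norm (Sh *v v))^2"
  using integral_inner_sq norm_psd_sqrt_mult_squared[OF Sh] by simp

lemma bdd_above_cube_moment_ratio: "bdd_above (cube_moment_ratio M X ` {u. norm u = 1})"
proof -
  interpret prob_space M by (rule prob)
  obtain Kc where Kc: "Kc > 0" "\<And>z. norm (matrix_inv Sh *v z) \<le> norm z * Kc"
    using bounded_linear.pos_bounded[OF matrix_vector_mul_bounded_linear] by blast
  define B where "B = \<bar>bX\<bar> * real CARD('n)"
  have "cube_moment_ratio M X u \<le> B^3 * Kc^3" if u: "norm u = 1" for u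
  proof -
    have pointwise: "\<bar>X \<omega> \<bullet> u\<bar> \<le> B" if "\<forall>i. \<bar>X \<omega> $ i\<bar> \<le> bX" for \<omega>
    proof -
      have "\<bar>X \<omega> \<bullet> u\<bar> \<le> \<bar>bX\<bar> * l1norm u"
        using that by (intro abs_inner_le_l1norm) (auto intro: order_trans)
      also have "l1norm u \<le> real CARD('n)"
        using sum_mono[of UNIV "\<lambda>i. \<bar>u $ i\<bar>" "\<lambda>_. 1"] component_le_norm_cart[of u] u by (simp add: l1norm_def)
      finally show ?thesis unfolding B_def by (simp add: mult_left_mono)
    qed
    have "AE \<omega> in M. \<bar>X \<omega> \<bullet> u\<bar>^3 \<le> B^3"
      using X_bounded by eventually_elim (simp add: pointwise power_mono)
    then have "(\<integral>\<omega>. \<bar>X \<omega> \<bullet> u\<bar>^3 \<partial>M) \<le> (\<integral>\<omega>. B^3 \<partial>M)"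
      by (intro integral_mono_AE integrable_continuous_bounded_design continuous_intros) simp_all
    then have num: "(\<integral>\<omega>. \<bar>X \<omega> \<bullet> u\<bar>^3 \<partial>M) \<le> B^3" by (simp add: prob_space)
    have "u = matrix_inv Sh *v (Sh *v u)"
      by (simp add: matrix_vector_mul_assoc psd_sqrt_left_inv[OF Sh])
    then have "1 \<le> norm (Sh *v u) * Kc" using Kc(2)[of "Sh *v u"] u by metis
    then have den: "1 / Kc^3 \<le> (\<integral>\<omega>. (X \<omega> \<bullet> u)^2 \<partial>M) powr (3/2)"
      unfolding integral_inner_sq_psd_sqrt power2_powr_three_halves[OF norm_ge_zero]
      using Kc(1) by (simp add: divide_le_eq power_mult_distrib[symmetric] one_le_power)
    show ?thesis unfolding cube_moment_ratio_def
      using frac_le[OF _ num _ den] Kc(1) by (simp add: B_def)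
  qed
  then show ?thesis by (auto intro!: bdd_aboveI2)
qed

lemma cube_moment_ratio_le_m3: "norm u = 1 \<Longrightarrow> cube_moment_ratio M X u \<le> m3_const M X"
  unfolding m3_const_eq_Sup_ratio by (intro cSup_upper bdd_above_cube_moment_ratio) simp

lemma m3_const_nonneg: "0 \<le> m3_const M X"
proof -
  let ?u = "axis undefined (1::real) :: real^'n"
  have "0 \<le> cube_moment_ratio M X ?u"
    unfolding cube_moment_ratio_def by (intro divide_nonneg_nonneg integral_nonneg_AE) auto
  also have "\<dots> \<le> m3_const M X" by (rule cube_moment_ratio_le_m3) simp
  finally show ?thesis .
qed

lemma cube_moment_le_m3: "(\<integral>\<omega>. \<bar>X \<omega> \<bullet> v\<bar>^3 \<partial>M) \<le> m3_const M X * (norm (Sh *v v))^3"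
proof (cases "v = 0")
  case False
  define u where "u = (1 / norm v) *\<^sub>R v"
  have nv: "0 < norm v" and nSv: "0 < norm (Sh *v v)"
    using False psd_sqrt_mult_eq_0_iff[OF Sh] by auto
  have num: "(\<integral>\<omega>. \<bar>X \<omega> \<bullet> u\<bar>^3 \<partial>M) = (\<integral>\<omega>. \<bar>X \<omega> \<bullet> v\<bar>^3 \<partial>M) / (norm v)^3"
    using nv by (simp add: u_def abs_mult power_mult_distrib field_simps)
  have "(\<integral>\<omega>. (X \<omega> \<bullet> u)^2 \<partial>M) = (norm (Sh *v v) / norm v)^2"
    unfolding integral_inner_sq_psd_sqrt by (simp add: u_def matrix_vector_mult_scaleR)
  then have den: "(\<integral>\<omega>. (X \<omega> \<bullet> u)^2 \<partial>M) powr (3/2) = (norm (Sh *v v))^3 / (norm v)^3"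
    using power2_powr_three_halves[of "norm (Sh *v v) / norm v"] by (simp add: power_divide)
  have "norm u = 1" using nv by (simp add: u_def)
  from cube_moment_ratio_le_m3[OF this, unfolded cube_moment_ratio_def]
  have "(\<integral>\<omega>. \<bar>X \<omega> \<bullet> v\<bar>^3 \<partial>M) / (norm (Sh *v v))^3 \<le> m3_const M X"
    unfolding num den using nv by (simp add: divide_divide_eq_left)
  then show ?thesis using nSv by (simp add: pos_divide_le_eq)
qed simp

text \<open>H\<ouml>lder's inequality with exponents 3/2 and 3: apply the weighted Young inequality
  pointwise, with weights the \<Sigma>-norms of d and w.\<close>
lemma cross_moment_le_m3:
  "(\<integral>\<omega>. (X \<omega> \<bullet> d)^2 * \<bar>X \<omega> \<bullet> w\<bar> \<partial>M) \<le> m3_const M X * (norm (Sh *v d))^2 * norm (Sh *v w)"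
proof (cases "d = 0 \<or> w = 0")
  case False
  define a where "a = norm (Sh *v d)"
  define c where "c = norm (Sh *v w)"
  have a: "0 < a" and c: "0 < c" using False psd_sqrt_mult_eq_0_iff[OF Sh] by (auto simp: a_def c_def)
  have int_cube: "integrable M (\<lambda>\<omega>. \<bar>X \<omega> \<bullet> v\<bar>^3)" for v
    by (intro integrable_continuous_bounded_design continuous_intros)
  have young: "(X \<omega> \<bullet> d)^2 * \<bar>X \<omega> \<bullet> w\<bar>
      \<le> (2/3) * (c / a) * \<bar>X \<omega> \<bullet> d\<bar>^3 + (1/3) * (a^2 / c^2) * \<bar>X \<omega> \<bullet> w\<bar>^3" for \<omega>
    using sq_mult_le_weighted_cubes[OF a c abs_ge_zero abs_ge_zero, of "X \<omega> \<bullet> d" "X \<omega> \<bullet> w"] by simp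
  have int_lhs: "integrable M (\<lambda>\<omega>. (X \<omega> \<bullet> d)^2 * \<bar>X \<omega> \<bullet> w\<bar>)"
    by (intro integrable_continuous_bounded_design continuous_intros)
  have int_rhs: "integrable M (\<lambda>\<omega>. (2/3) * (c / a) * \<bar>X \<omega> \<bullet> d\<bar>^3 + (1/3) * (a^2 / c^2) * \<bar>X \<omega> \<bullet> w\<bar>^3)"
    using int_cube[of d] int_cube[of w] by simp
  have "(\<integral>\<omega>. (X \<omega> \<bullet> d)^2 * \<bar>X \<omega> \<bullet> w\<bar> \<partial>M)
      \<le> (\<integral>\<omega>. (2/3) * (c / a) * \<bar>X \<omega> \<bullet> d\<bar>^3 + (1/3) * (a^2 / c^2) * \<bar>X \<omega> \<bullet> w\<bar>^3 \<partial>M)"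
    by (rule integral_mono[OF int_lhs int_rhs young])
  also have "\<dots> = (2/3) * (c / a) * (\<integral>\<omega>. \<bar>X \<omega> \<bullet> d\<bar>^3 \<partial>M) + (1/3) * (a^2 / c^2) * (\<integral>\<omega>. \<bar>X \<omega> \<bullet> w\<bar>^3 \<partial>M)"
    using int_cube[of d] int_cube[of w] by simp
  also have "\<dots> \<le> (2/3) * (c / a) * (m3_const M X * a^3) + (1/3) * (a^2 / c^2) * (m3_const M X * c^3)"
    using cube_moment_le_m3[of d] cube_moment_le_m3[of w] a c
    by (intro add_mono mult_left_mono) (simp_all add: a_def c_def)
  also have "\<dots> = m3_const M X * a^2 * c"
    using a c by (simp add: field_simps power3_eq_cube power2_eq_square)
  finally show ?thesis by (simp add: a_def c_def)
next
  case True
  then show ?thesis by (elim disjE) simp_all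
qed

end

end

section \<open>The QES score\<close>

lemma abs_efun_le:
  assumes "0 \<le> \<tau>"
  shows "\<bar>efun \<tau> tstar y x \<beta>\<bar>
    \<le> \<bar>min (y - x \<bullet> bstar) 0\<bar> + (\<bar>x \<bullet> (\<beta> - bstar)\<bar> + \<tau> * \<bar>x \<bullet> \<beta>\<bar> + \<tau> * \<bar>x \<bullet> tstar\<bar>)"
proof -
  have hinge: "\<bar>(y - x \<bullet> \<beta>) * (if y \<le> x \<bullet> \<beta> then 1 else 0)\<bar> \<le> \<bar>min (y - x \<bullet> bstar) 0\<bar> + \<bar>x \<bullet> (\<beta> - bstar)\<bar>"
    by (auto simp: inner_diff_right)
  have "\<bar>efun \<tau> tstar y x \<beta>\<bar>
      \<le> \<bar>(y - x \<bullet> \<beta>) * (if y \<le> x \<bullet> \<beta> then 1 else 0)\<bar> + \<bar>\<tau> * (x \<bullet> \<beta>)\<bar> + \<bar>\<tau> * (x \<bullet> tstar)\<bar>"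
    unfolding efun_def Zfun_def by linarith
  moreover have "\<bar>\<tau> * (x \<bullet> \<beta>)\<bar> = \<tau> * \<bar>x \<bullet> \<beta>\<bar>" "\<bar>\<tau> * (x \<bullet> tstar)\<bar> = \<tau> * \<bar>x \<bullet> tstar\<bar>"
    using assms by (simp_all add: abs_mult)
  ultimately show ?thesis using hinge by linarith
qed

locale QES_model = regular_cond_distr M X Y K
  for M :: "'a measure" and X :: "'a \<Rightarrow> real^'n" and Y K +
  fixes \<tau> :: real and bstar tstar :: "real^'n" and fu se be bX :: real
  assumes tau_pos: "0 < \<tau>" and tau_less_1: "\<tau> < 1"
    and QES: "model_QES M X K \<tau> bstar tstar"
    and condA: "conditionA M X K bstar fu se be"
    and X_bounded: "AE \<omega> in M. \<forall>i. \<bar>X \<omega> $ i\<bar> \<le> bX"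
begin

lemma fu_pos: "0 < fu"
  using condA by (simp add: conditionA_def)

lemma bX_nonneg: "0 \<le> bX"
proof -
  have "AE \<omega> in M. 0 \<le> bX" using X_bounded by eventually_elim (meson abs_ge_zero order_trans)
  then show ?thesis by simp
qed

lemma cond_score_bound_at:
  assumes F_C1: "F_eps K bstar x C1_differentiable_on UNIV"
    and F_lip: "\<forall>t. \<bar>F_eps K bstar x t - F_eps K bstar x 0\<bar> \<le> fu * \<bar>t\<bar>"
    and F_sq: "(\<integral>\<^sup>+ y. ennreal ((min (y - x \<bullet> bstar) 0)\<^sup>2) \<partial>K x) < \<infinity>"
    and quantile: "cond_quantile K x \<tau> = x \<bullet> bstar"
    and shortfall: "(1 / \<tau>) * (LINT u:{0..\<tau>}|lborel. cond_quantile K x u) = x \<bullet> tstar"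
  shows "integrable (K x) (\<lambda>y. efun \<tau> tstar y x \<beta>)"
    and "\<bar>\<integral>y. efun \<tau> tstar y x \<beta> \<partial>K x\<bar> \<le> fu * (x \<bullet> (\<beta> - bstar))^2 / 2"
proof -
  interpret Kx: cdf_distribution "K x"
    by (simp add: cdf_distribution_def real_distribution_def real_distribution_axioms_def prob_space_K sets_K)
  have cdf_eq: "cdf (K x) = (\<lambda>s. F_eps K bstar x (s - x \<bullet> bstar))"
    by (simp add: fun_eq_iff cdf_def2 F_eps_def)
  have I_eq: "Kx.I u = cond_quantile K x u" for u
    by (simp add: cond_quantile_def cdf_def2)
  have q: "Kx.I \<tau> = x \<bullet> bstar" using quantile I_eq by simp
  have "continuous_on UNIV (\<lambda>s. F_eps K bstar x (s - x \<bullet> bstar))"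
    by (rule continuous_on_compose2[OF C1_differentiable_imp_continuous_on[OF F_C1]])
      (auto intro!: continuous_intros)
  then have cont: "isCont (cdf (K x)) (Kx.I \<tau>)"
    unfolding cdf_eq by (simp add: continuous_on_eq_continuous_at)
  have lip: "\<bar>cdf (K x) s - cdf (K x) (Kx.I \<tau>)\<bar> \<le> fu * \<bar>s - Kx.I \<tau>\<bar>" for s
    using F_lip[rule_format, of "s - x \<bullet> bstar"] unfolding q by (simp add: cdf_eq)
  have "integrable (K x) (\<lambda>y. (min (y - x \<bullet> bstar) 0)^2)"
  proof (rule integrableI_nonneg)
    show "(\<lambda>y. (min (y - x \<bullet> bstar) 0)^2) \<in> borel_measurable (K x)" by measurable
    show "AE y in K x. 0 \<le> (min (y - x \<bullet> bstar) 0)^2" by simp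
  qed (rule F_sq)
  then have int: "integrable (K x) (\<lambda>y. min (y - Kx.I \<tau>) 0)"
    unfolding q by (rule Kx.square_integrable_imp_integrable[rotated]) measurable
  have efun_eq: "efun \<tau> tstar y x \<beta>
      = (y - x \<bullet> \<beta>) * indicator {..x \<bullet> \<beta>} y + \<tau> * (x \<bullet> \<beta>) - (LINT u:{0..\<tau>}|lborel. Kx.I u)" for y
    using shortfall tau_pos by (simp add: efun_def Zfun_def I_eq field_simps indicator_def)
  note bound = Kx.QES_score_bound[OF cont lip tau_pos tau_less_1 int, of "x \<bullet> \<beta>"]
  show "integrable (K x) (\<lambda>y. efun \<tau> tstar y x \<beta>)"
    unfolding efun_eq using bound(1) .
  show "\<bar>\<integral>y. efun \<tau> tstar y x \<beta> \<partial>K x\<bar> \<le> fu * (x \<bullet> (\<beta> - bstar))^2 / 2"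
    unfolding efun_eq using bound(2) by (simp add: q inner_diff_right)
qed

lemma AE_cond_score_bound:
  "AE x in P\<^sub>X. integrable (K x) (\<lambda>y. efun \<tau> tstar y x \<beta>)
     \<and> \<bar>\<integral>y. efun \<tau> tstar y x \<beta> \<partial>K x\<bar> \<le> fu * (x \<bullet> (\<beta> - bstar))^2 / 2"
proof -
  have "AE x in P\<^sub>X. F_eps K bstar x C1_differentiable_on UNIV \<and>
      (\<forall>t. \<bar>F_eps K bstar x t - F_eps K bstar x 0\<bar> \<le> fu * \<bar>t\<bar>) \<and>
      (\<integral>\<^sup>+ y. ennreal ((min (y - x \<bullet> bstar) 0)\<^sup>2) \<partial>K x) \<le> ennreal (se\<^sup>2)"
    using condA unfolding conditionA_def by (auto elim!: eventually_mono)
  moreover have "AE x in P\<^sub>X. cond_quantile K x \<tau> = x \<bullet> bstar \<and>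
      (1 / \<tau>) * (LINT u:{0..\<tau>}|lborel. cond_quantile K x u) = x \<bullet> tstar"
    using QES unfolding model_QES_def by simp
  ultimately show ?thesis
  proof eventually_elim
    case (elim x)
    then have "(\<integral>\<^sup>+ y. ennreal ((min (y - x \<bullet> bstar) 0)\<^sup>2) \<partial>K x) < \<infinity>"
      using le_less_trans by fastforce
    with elim show ?case using cond_score_bound_at[of x] by blast
  qed
qed

lemma integrable_lower_error_sq: "integrable M (\<lambda>\<omega>. (min (Y \<omega> - X \<omega> \<bullet> bstar) 0)^2)"
proof (rule integrableI_nonneg)
  show "(\<lambda>\<omega>. (min (Y \<omega> - X \<omega> \<bullet> bstar) 0)^2) \<in> borel_measurable M" by measurable
  show "AE \<omega> in M. 0 \<le> (min (Y \<omega> - X \<omega> \<bullet> bstar) 0)^2" by simp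
  interpret PX: prob_space P\<^sub>X by (rule prob_space_distr) simp
  have "AE x in P\<^sub>X. (\<integral>\<^sup>+ y. ennreal ((min (y - x \<bullet> bstar) 0)\<^sup>2) \<partial>K x) \<le> ennreal (se\<^sup>2)"
    using condA unfolding conditionA_def by (auto elim!: eventually_mono)
  then have "(\<integral>\<^sup>+x. (\<integral>\<^sup>+y. ennreal ((min (y - x \<bullet> bstar) 0)^2) \<partial>K x) \<partial>P\<^sub>X) \<le> (\<integral>\<^sup>+x. ennreal (se^2) \<partial>P\<^sub>X)"
    by (rule nn_integral_mono_AE)
  also have "\<dots> = ennreal (se^2)" using PX.emeasure_space_1 by simp
  finally have "(\<integral>\<^sup>+x. (\<integral>\<^sup>+y. ennreal ((min (y - x \<bullet> bstar) 0)^2) \<partial>K x) \<partial>P\<^sub>X) \<le> ennreal (se^2)" .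
  moreover have "(\<integral>\<^sup>+\<omega>. ennreal ((min (Y \<omega> - X \<omega> \<bullet> bstar) 0)^2) \<partial>M)
      = (\<integral>\<^sup>+x. (\<integral>\<^sup>+y. ennreal ((min (y - x \<bullet> bstar) 0)^2) \<partial>K x) \<partial>P\<^sub>X)"
    by (rule nn_integral_disintegration[where f="\<lambda>(x, y). ennreal ((min (y - x \<bullet> bstar) 0)^2)", simplified]) measurable
  ultimately have "(\<integral>\<^sup>+\<omega>. ennreal ((min (Y \<omega> - X \<omega> \<bullet> bstar) 0)^2) \<partial>M) \<le> ennreal (se^2)"
    by simp
  then show "(\<integral>\<^sup>+\<omega>. ennreal ((min (Y \<omega> - X \<omega> \<bullet> bstar) 0)^2) \<partial>M) < \<infinity>"
    using ennreal_less_top[of "se^2"] unfolding infinity_ennreal_def by (rule le_less_trans)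
qed

lemma integrable_score_mult:
  assumes g: "continuous_on UNIV g"
  shows "integrable M (\<lambda>\<omega>. efun \<tau> tstar (Y \<omega>) (X \<omega>) \<beta> * g (X \<omega>))"
proof -
  note bounded = bounded_continuous_design[OF prob_space_axioms X_measurable X_bounded]
  obtain C where C: "AE \<omega> in M. norm (g (X \<omega>)) \<le> C" using bounded[OF g] .
  let ?lin = "\<lambda>x. \<bar>x \<bullet> (\<beta> - bstar)\<bar> + \<tau> * \<bar>x \<bullet> \<beta>\<bar> + \<tau> * \<bar>x \<bullet> tstar\<bar>"
  have "continuous_on UNIV ?lin" by (intro continuous_intros)
  then obtain D where D: "AE \<omega> in M. norm (?lin (X \<omega>)) \<le> D" by (rule bounded)
  have int_min: "integrable M (\<lambda>\<omega>. min (Y \<omega> - X \<omega> \<bullet> bstar) 0)"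
    by (rule square_integrable_imp_integrable[OF _ integrable_lower_error_sq]) measurable
  show ?thesis
  proof (rule Bochner_Integration.integrable_bound)
    show "integrable M (\<lambda>\<omega>. (\<bar>min (Y \<omega> - X \<omega> \<bullet> bstar) 0\<bar> + D) * C)"
      using int_min by simp
    show "(\<lambda>\<omega>. efun \<tau> tstar (Y \<omega>) (X \<omega>) \<beta> * g (X \<omega>)) \<in> borel_measurable M"
      using borel_measurable_continuous_onI[OF g] unfolding efun_def Zfun_def by measurable
    show "AE \<omega> in M. norm (efun \<tau> tstar (Y \<omega>) (X \<omega>) \<beta> * g (X \<omega>))
        \<le> norm ((\<bar>min (Y \<omega> - X \<omega> \<bullet> bstar) 0\<bar> + D) * C)"
      using C D
    proof eventually_elim
      case (elim \<omega>)
      have "\<bar>efun \<tau> tstar (Y \<omega>) (X \<omega>) \<beta>\<bar> \<le> \<bar>min (Y \<omega> - X \<omega> \<bullet> bstar) 0\<bar> + D"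
        using abs_efun_le[of \<tau> tstar "Y \<omega>" "X \<omega>" \<beta> bstar] elim(2) tau_pos by simp
      then have "\<bar>efun \<tau> tstar (Y \<omega>) (X \<omega>) \<beta>\<bar> * \<bar>g (X \<omega>)\<bar> \<le> (\<bar>min (Y \<omega> - X \<omega> \<bullet> bstar) 0\<bar> + D) * C"
        using elim(1) by (intro mult_mono) auto
      then have "norm (efun \<tau> tstar (Y \<omega>) (X \<omega>) \<beta> * g (X \<omega>)) \<le> (\<bar>min (Y \<omega> - X \<omega> \<bullet> bstar) 0\<bar> + D) * C"
        by (simp add: abs_mult)
      then show ?case by (rule order_trans) simp
    qed
  qed
qed

lemma abs_expectation_score_mult_le:
  assumes g: "continuous_on UNIV g"
  shows "\<bar>\<integral>\<omega>. efun \<tau> tstar (Y \<omega>) (X \<omega>) \<beta> * g (X \<omega>) \<partial>M\<bar>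
    \<le> (\<integral>\<omega>. fu * (X \<omega> \<bullet> (\<beta> - bstar))^2 * \<bar>g (X \<omega>)\<bar> / 2 \<partial>M)"
proof -
  define h where "h x = (\<integral>y. efun \<tau> tstar y x \<beta> \<partial>K x)" for x
  define bound where "bound x = fu * (x \<bullet> (\<beta> - bstar))^2 * \<bar>g x\<bar> / 2" for x
  have g_meas[measurable]: "g \<in> borel_measurable borel" by (rule borel_measurable_continuous_onI[OF g])
  have "(\<lambda>(x, y). efun \<tau> tstar y x \<beta> * g x) \<in> borel_measurable XY_space"
    unfolding efun_def Zfun_def by measurable
  from integral_disintegration[OF this] integrable_score_mult[OF g]
  have disintegrate: "(\<integral>\<omega>. efun \<tau> tstar (Y \<omega>) (X \<omega>) \<beta> * g (X \<omega>) \<partial>M) = (\<integral>x. h x * g x \<partial>P\<^sub>X)"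
    by (simp add: h_def)
  have "continuous_on UNIV bound" unfolding bound_def by (intro continuous_intros g) auto
  moreover note integrable_continuous_bounded_design[OF prob_space_axioms X_measurable X_bounded this]
  ultimately have int_bound: "integrable P\<^sub>X bound"
    by (subst integrable_distr_eq) (simp_all add: borel_measurable_continuous_onI)
  have "\<bar>\<integral>x. h x * g x \<partial>P\<^sub>X\<bar> \<le> (\<integral>x. \<bar>h x * g x\<bar> \<partial>P\<^sub>X)" by (rule integral_abs_bound)
  also have "\<dots> \<le> (\<integral>x. bound x \<partial>P\<^sub>X)"
  proof (rule integral_mono_AE'[OF int_bound])
    show "AE x in P\<^sub>X. \<bar>h x * g x\<bar> \<le> bound x"
      using AE_cond_score_bound[of \<beta>]
    proof eventually_elim
      case (elim x)
      then have "\<bar>h x\<bar> * \<bar>g x\<bar> \<le> fu * (x \<bullet> (\<beta> - bstar))^2 / 2 * \<bar>g x\<bar>"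
        unfolding h_def by (intro mult_right_mono) simp_all
      then show ?case by (simp add: bound_def abs_mult)
    qed
    show "AE x in P\<^sub>X. 0 \<le> bound x" using fu_pos by (simp add: bound_def)
  qed
  also have "\<dots> = (\<integral>\<omega>. bound (X \<omega>) \<partial>M)" by (rule integral_distr) (simp_all add: bound_def)
  finally show ?thesis unfolding disintegrate by (simp add: bound_def)
qed

lemma integrable_score_scaleR:
  assumes F: "continuous_on UNIV (F :: real^'n \<Rightarrow> 'b::{banach, second_countable_topology})"
  shows "integrable M (\<lambda>\<omega>. efun \<tau> tstar (Y \<omega>) (X \<omega>) \<beta> *\<^sub>R F (X \<omega>))"
proof -
  obtain C where C: "AE \<omega> in M. norm (F (X \<omega>)) \<le> C"
    using bounded_continuous_design[OF prob_space_axioms X_measurable X_bounded F] .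
  have "integrable M (\<lambda>\<omega>. efun \<tau> tstar (Y \<omega>) (X \<omega>) \<beta>)"
    using integrable_score_mult[of "\<lambda>_. 1"] by simp
  moreover have "(\<lambda>\<omega>. F (X \<omega>)) \<in> borel_measurable M"
    using borel_measurable_continuous_onI[OF F] by measurable
  ultimately show ?thesis using C by (rule integrable_scaleR_bounded)
qed

lemma norm_score_drop_coord_le:
  assumes Sh: "is_psd_sqrt Sh (second_moment M X)"
    and Shj: "is_psd_sqrt Shj (second_moment M (\<lambda>\<omega>. drop_coord idx (X \<omega>)))"
  shows "norm (\<integral>\<omega>. efun \<tau> tstar (Y \<omega>) (X \<omega>) \<beta> *\<^sub>R (matrix_inv Shj *v drop_coord idx (X \<omega>)) \<partial>M)
    \<le> norm (\<integral>\<omega>. efun \<tau> tstar (Y \<omega>) (X \<omega>) \<beta> *\<^sub>R (matrix_inv Sh *v X \<omega>) \<partial>M)"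
proof -
  let ?eX = "\<lambda>\<omega>. efun \<tau> tstar (Y \<omega>) (X \<omega>) \<beta> *\<^sub>R X \<omega>"
  have int: "integrable M ?eX"
    using integrable_score_scaleR[of "\<lambda>x. x"] by simp
  have linear_image: "(\<integral>\<omega>. efun \<tau> tstar (Y \<omega>) (X \<omega>) \<beta> *\<^sub>R L (X \<omega>) \<partial>M) = L (integral\<^sup>L M ?eX)"
    if "bounded_linear L" for L :: "real^'n \<Rightarrow> real^'m"
    using integral_bounded_linear[OF that int] by (simp add: linear_simps(5)[OF that])
  have "bounded_linear (\<lambda>z. matrix_inv Shj *v drop_coord idx z)"
    by (intro bounded_linear_compose[OF matrix_vector_mul_bounded_linear bounded_linear_drop_coord])
  from linear_image[OF this] linear_image[OF matrix_vector_mul_bounded_linear[of "matrix_inv Sh"]]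
  show ?thesis
    by (simp only:) (rule norm_inv_sqrt_submatrix_le[OF Sh Shj[unfolded second_moment_drop_coord]])
qed

lemma inner_score_inv_sqrt_le:
  assumes Sh: "is_psd_sqrt Sh (second_moment M X)"
  shows "(\<integral>\<omega>. efun \<tau> tstar (Y \<omega>) (X \<omega>) \<beta> *\<^sub>R (matrix_inv Sh *v X \<omega>) \<partial>M) \<bullet> u
    \<le> fu / 2 * m3_const M X * (norm (Sh *v (\<beta> - bstar)))^2 * norm u"
proof -
  let ?e = "\<lambda>\<omega>. efun \<tau> tstar (Y \<omega>) (X \<omega>) \<beta>"
  define w where "w = matrix_inv Sh *v u"
  have int: "integrable M (\<lambda>\<omega>. ?e \<omega> *\<^sub>R (matrix_inv Sh *v X \<omega>))"
    by (intro integrable_score_scaleR linear_continuous_on matrix_vector_mul_bounded_linear)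
  have "(matrix_inv Sh *v x) \<bullet> u = x \<bullet> w" for x
    using matrix_vector_mult_inner_transpose[of "matrix_inv Sh" x u] psd_sqrt_inv_symmetric[OF Sh]
    by (simp add: w_def)
  then have "(\<integral>\<omega>. ?e \<omega> *\<^sub>R (matrix_inv Sh *v X \<omega>) \<partial>M) \<bullet> u = (\<integral>\<omega>. ?e \<omega> * (X \<omega> \<bullet> w) \<partial>M)"
    by (simp add: integral_inner_left[OF int, symmetric])
  also have "\<dots> \<le> \<bar>\<integral>\<omega>. ?e \<omega> * (X \<omega> \<bullet> w) \<partial>M\<bar>" by (rule abs_ge_self)
  also have "\<dots> \<le> (\<integral>\<omega>. fu * (X \<omega> \<bullet> (\<beta> - bstar))^2 * \<bar>X \<omega> \<bullet> w\<bar> / 2 \<partial>M)"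
    by (rule abs_expectation_score_mult_le) (intro continuous_intros)
  also have "\<dots> = fu / 2 * (\<integral>\<omega>. (X \<omega> \<bullet> (\<beta> - bstar))^2 * \<bar>X \<omega> \<bullet> w\<bar> \<partial>M)"
    by (simp add: field_simps)
  also have "\<dots> \<le> fu / 2 * (m3_const M X * (norm (Sh *v (\<beta> - bstar)))^2 * norm (Sh *v w))"
    using cross_moment_le_m3[OF prob_space_axioms X_measurable X_bounded Sh] fu_pos
    by (intro mult_left_mono) simp_all
  also have "Sh *v w = u"
    by (simp add: w_def matrix_vector_mul_assoc psd_sqrt_right_inv[OF Sh])
  finally show ?thesis by (simp add: mult.assoc)
qed

lemma norm_score_inv_sqrt_le:
  assumes Sh: "is_psd_sqrt Sh (second_moment M X)" and \<beta>: "norm (Sh *v (\<beta> - bstar)) \<le> r0"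
  shows "norm (\<integral>\<omega>. efun \<tau> tstar (Y \<omega>) (X \<omega>) \<beta> *\<^sub>R (matrix_inv Sh *v X \<omega>) \<partial>M)
    \<le> fu * m3_const M X * r0^2 / 2"
proof -
  define U where "U = (\<integral>\<omega>. efun \<tau> tstar (Y \<omega>) (X \<omega>) \<beta> *\<^sub>R (matrix_inv Sh *v X \<omega>) \<partial>M)"
  have m3: "0 \<le> m3_const M X"
    by (rule m3_const_nonneg[OF prob_space_axioms X_measurable X_bounded Sh])
  have "norm U = U \<bullet> sgn U"
    by (simp add: sgn_div_norm power2_norm_eq_inner[symmetric] power2_eq_square divide_simps)
  also have "\<dots> \<le> fu / 2 * m3_const M X * (norm (Sh *v (\<beta> - bstar)))^2 * norm (sgn U)"
    unfolding U_def by (rule inner_score_inv_sqrt_le[OF Sh])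
  also have "\<dots> \<le> fu / 2 * m3_const M X * r0^2 * 1"
    using \<beta> m3 fu_pos by (intro mult_mono power_mono) (simp_all add: norm_sgn)
  finally show ?thesis unfolding U_def by simp
qed

lemma abs_score_residual_le:
  assumes Sh: "is_psd_sqrt Sh (second_moment M X)" and \<beta>: "norm (Sh *v (\<beta> - bstar)) \<le> r0"
    and resid: "AE \<omega> in M. \<bar>X \<omega> $ j - drop_coord idx (X \<omega>) \<bullet> gstar\<bar> \<le> bX"
  shows "\<bar>\<integral>\<omega>. efun \<tau> tstar (Y \<omega>) (X \<omega>) \<beta> * (X \<omega> $ j - drop_coord idx (X \<omega>) \<bullet> gstar) \<partial>M\<bar>
    \<le> fu * bX * r0^2 / 2"
proof -
  define g where "g x = x $ j - drop_coord idx x \<bullet> gstar" for x :: "real^'n"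
  have "continuous_on UNIV g"
    unfolding g_def by (intro continuous_intros linear_continuous_on bounded_linear_drop_coord)
  then have "\<bar>\<integral>\<omega>. efun \<tau> tstar (Y \<omega>) (X \<omega>) \<beta> * g (X \<omega>) \<partial>M\<bar>
      \<le> (\<integral>\<omega>. fu * (X \<omega> \<bullet> (\<beta> - bstar))^2 * \<bar>g (X \<omega>)\<bar> / 2 \<partial>M)"
    by (rule abs_expectation_score_mult_le)
  also have "\<dots> \<le> (\<integral>\<omega>. fu * bX / 2 * (X \<omega> \<bullet> (\<beta> - bstar))^2 \<partial>M)"
  proof (rule integral_mono_AE')
    show "integrable M (\<lambda>\<omega>. fu * bX / 2 * (X \<omega> \<bullet> (\<beta> - bstar))^2)"
      by (intro integrable_continuous_bounded_design[OF prob_space_axioms X_measurable X_bounded]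
          continuous_intros)
    show "AE \<omega> in M. fu * (X \<omega> \<bullet> (\<beta> - bstar))^2 * \<bar>g (X \<omega>)\<bar> / 2 \<le> fu * bX / 2 * (X \<omega> \<bullet> (\<beta> - bstar))^2"
      using resid
    proof eventually_elim
      case (elim \<omega>)
      then have "(X \<omega> \<bullet> (\<beta> - bstar))^2 * \<bar>g (X \<omega>)\<bar> \<le> (X \<omega> \<bullet> (\<beta> - bstar))^2 * bX"
        by (intro mult_left_mono) (simp_all add: g_def)
      from mult_left_mono[OF this, of "fu / 2"] show ?case
        using fu_pos by (simp add: algebra_simps)
    qed
    show "AE \<omega> in M. 0 \<le> fu * bX / 2 * (X \<omega> \<bullet> (\<beta> - bstar))^2"
      using fu_pos bX_nonneg by simp
  qed
  also have "\<dots> = fu * bX / 2 * (norm (Sh *v (\<beta> - bstar)))^2"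
    by (simp add: integral_inner_sq_psd_sqrt[OF prob_space_axioms X_measurable X_bounded Sh])
  also have "\<dots> \<le> fu * bX / 2 * r0^2"
    using \<beta> fu_pos bX_nonneg by (intro mult_left_mono power_mono) simp_all
  finally show ?thesis by (simp add: g_def)
qed

end

lemma conditionB_bounded_design:
  assumes "conditionB M X n bstar tstar bX m4"
  shows "AE \<omega> in M. \<forall>i. \<bar>X \<omega> $ i\<bar> \<le> bX"
proof -
  have "AE \<omega> in M. infnorm (X \<omega>) \<le> bX"
    using assms by (simp add: conditionB_def design_cond_def Let_def)
  then show ?thesis by eventually_elim (meson component_le_infnorm_cart order_trans)
qed

theorem mainTheorem9:
  fixes M :: "'a measure" and X :: "'a \<Rightarrow> real^'p::finite" and Y :: "'a \<Rightarrow> real"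
    and K :: "real^'p \<Rightarrow> real measure"
    and \<tau> :: real and bstar tstar :: "real^'p" and n :: nat and i1 :: 'p
    and j :: 'p and idx :: "'q::finite \<Rightarrow> 'p"
    and Sh :: "real^'p^'p" and Shj :: "real^'q^'q"
    and fu se be bX m4 r0 :: real
  assumes "prob_space M"
    and "X \<in> borel_measurable M" and "Y \<in> borel_measurable M"
    and "AE \<omega> in M. X \<omega> $ i1 = 1"
    and "0 < \<tau>" and "\<tau> < 1"
    and "is_cond_distr M X Y K"
    and "model_QES M X K \<tau> bstar tstar"
    and "pos_def_mat (second_moment M X)"
    and "is_psd_sqrt Sh (second_moment M X)"
    and "bij_betw idx UNIV (UNIV - {j})"
    and "is_psd_sqrt Shj (second_moment M (\<lambda>\<omega>. drop_coord idx (X \<omega>)))"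
    and "conditionA M X K bstar fu se be"
    and "conditionB M X n bstar tstar bX m4"
    and "r0 > 0"
  shows "(SUP \<beta>\<in>{\<beta>. norm (Sh *v (\<beta> - bstar)) \<le> r0}.
            norm (\<integral>\<omega>. efun \<tau> tstar (Y \<omega>) (X \<omega>) \<beta> *\<^sub>R
                        (matrix_inv Shj *v drop_coord idx (X \<omega>)) \<partial>M))
         \<le> (SUP \<beta>\<in>{\<beta>. norm (Sh *v (\<beta> - bstar)) \<le> r0}.
            norm (\<integral>\<omega>. efun \<tau> tstar (Y \<omega>) (X \<omega>) \<beta> *\<^sub>R (matrix_inv Sh *v X \<omega>) \<partial>M))
    \<and> (SUP \<beta>\<in>{\<beta>. norm (Sh *v (\<beta> - bstar)) \<le> r0}.
            norm (\<integral>\<omega>. efun \<tau> tstar (Y \<omega>) (X \<omega>) \<beta> *\<^sub>R (matrix_inv Sh *v X \<omega>) \<partial>M))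
         \<le> fu * m3_const M X * r0\<^sup>2 / 2
    \<and> (\<forall>gstar s0. conditionD M X n j idx gstar s0 (max (l0norm bstar) (l0norm tstar)) bX m4 \<longrightarrow>
         (SUP \<beta>\<in>{\<beta>. norm (Sh *v (\<beta> - bstar)) \<le> r0}.
            \<bar>\<integral>\<omega>. efun \<tau> tstar (Y \<omega>) (X \<omega>) \<beta> * (X \<omega> $ j - drop_coord idx (X \<omega>) \<bullet> gstar) \<partial>M\<bar>)
         \<le> fu * bX * r0\<^sup>2 / 2)"
proof -
  let ?B = "{\<beta>. norm (Sh *v (\<beta> - bstar)) \<le> r0}"
  let ?e = "\<lambda>\<beta> \<omega>. efun \<tau> tstar (Y \<omega>) (X \<omega>) \<beta>"
  interpret QES_model M X Y K \<tau> bstar tstar fu se be bX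
    by (rule QES_model.intro[OF regular_cond_distr.intro[OF assms(1) regular_cond_distr_axioms.intro[OF assms(2,3,7)]]
          QES_model_axioms.intro[OF assms(5,6,8,13) conditionB_bounded_design[OF assms(14)]]])
  have nonempty: "?B \<noteq> {}" using \<open>r0 > 0\<close> by (auto intro!: exI[of _ bstar])
  have W_bound: "norm (\<integral>\<omega>. ?e \<beta> \<omega> *\<^sub>R (matrix_inv Sh *v X \<omega>) \<partial>M) \<le> fu * m3_const M X * r0\<^sup>2 / 2"
    if "\<beta> \<in> ?B" for \<beta>
    using norm_score_inv_sqrt_le[OF assms(10)] that by simp
  have "(SUP \<beta>\<in>?B. norm (\<integral>\<omega>. ?e \<beta> \<omega> *\<^sub>R (matrix_inv Shj *v drop_coord idx (X \<omega>)) \<partial>M))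
      \<le> (SUP \<beta>\<in>?B. norm (\<integral>\<omega>. ?e \<beta> \<omega> *\<^sub>R (matrix_inv Sh *v X \<omega>) \<partial>M))"
    using W_bound norm_score_drop_coord_le[OF assms(10,12)]
    by (intro cSUP_mono[OF nonempty] bdd_aboveI2) blast+
  moreover have "(SUP \<beta>\<in>?B. norm (\<integral>\<omega>. ?e \<beta> \<omega> *\<^sub>R (matrix_inv Sh *v X \<omega>) \<partial>M)) \<le> fu * m3_const M X * r0\<^sup>2 / 2"
    using W_bound by (intro cSUP_least[OF nonempty]) blast
  moreover have "(SUP \<beta>\<in>?B. \<bar>\<integral>\<omega>. ?e \<beta> \<omega> * (X \<omega> $ j - drop_coord idx (X \<omega>) \<bullet> gstar) \<partial>M\<bar>)
      \<le> fu * bX * r0\<^sup>2 / 2"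
    if "conditionD M X n j idx gstar s0 (max (l0norm bstar) (l0norm tstar)) bX m4" for gstar s0
    using that abs_score_residual_le[OF assms(10)]
    by (intro cSUP_least[OF nonempty]) (auto simp: conditionD_def)
  ultimately show ?thesis by blast
qed

end
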